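(* Let $\mathcal C$ be a category, $n\ge0$, and $T\in Z^n(\mathcal C)$. For any two degeneracy maps $f:X\to T$ and $g:Y\to T$ in $Z^n(\mathcal C)$ that are sent to the same map of $Z^n(1)$ by the functor $Z^n(\mathcal C)\to Z^n(1)$ (induced by the unique functor $\mathcal C\to 1$ to the terminal category), there exists an isomorphism $\varphi:X\to Y$ such that $f=g\circ\varphi$. In particular, $\mathrm{Deg}(T)$ is finite.
   Context: Notation: for $n\ge 0$, $[n]$ denotes $\{0,\dots,n-1\}$; $\Delta_+$ is the category of these finite total orders and order-preserving maps. For monotone $\psi:[n]\to[m]$ define $\hat\psi:[m+1]\to[n+1]$ by $\hat\psi(i)=\min(\{j\in[n]:\psi(j)\ge i\}\cup\{n\})$. Zigzags: in a category $\mathcal C$, a zigzag $X$ of length $n$ is a diagram $X(r_0)\xrightarrow{x_0} X(s_0)\xleftarrow{x'_0} X(r_1)\to\cdots\xrightarrow{x_{n-1}} X(s_{n-1})\xleftarrow{x'_{n-1}} X(r_n)$. A zigzag map $f:X\to Y$ (lengths $n$, $m$) consists of a monotone $f_s:[n]\to[m]$, regular slices $f(r_i):X(r_{\hat{f_s}(i)})\to Y(r_i)$ for $0\le i\le m$ and singular slices $f(s_j):X(s_j)\to Y(s_{f_s(j)})$ for $0\le j<n$, such that for each $0\le i<m$: if $f_s^{-1}(i)\neq\emptyset$ with least element $p$, greatest $q$, then $f(s_p)\circ x_p=y_i\circ f(r_i)$, $f(s_q)\circ x'_q=y'_i\circ f(r_{i+1})$, $f(s_j)\circ x'_j=f(s_{j+1})\circ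 x_{j+1}$ for $p\le j<q$; if $f_s^{-1}(i)=\emptyset$ then $y_i\circ f(r_i)=y'_i\circ f(r_{i+1})$. Composition: $(g\circ f)_s=g_s\circ f_s$, $(g\circ f)(s_j)=g(s_{f_s(j)})\circ f(s_j)$, $(g\circ f)(r_i)=g(r_i)\circ f(r_{\hat{g_s}(i)})$. This gives a category $Z(\mathcal C)$, functorial in $\mathcal C$ (a functor acts on all objects and slices); $Z^0(\mathcal C)=\mathcal C$, $Z^n(\mathcal C)=Z(Z^{n-1}(\mathcal C))$. $\pi:Z(\mathcal C)\to\Delta_+$ sends a zigzag of length $n$ to $[n]$ and $f$ to $f_s$; $f$ is $\pi$-vertical if $\pi(f)$ is an identity; $f:x\to y$ is $\pi$-cocartesian if for every $h:x\to y'$ and $u:\pi(y)\to\pi(y')$ with $u\circ\pi(f)=\pi(h)$ there is a unique $v:y\to y'$ with $v\circ f=h$, $\pi(v)=u$. Degeneracy maps in $Z^n(\mathcal C)$ (by induction on $n$): in $Z^0(\mathcal C)$ the isomorphisms; for $n\ge1$ the maps generated under composition by simple degeneracy maps (the $\pi$-cocartesian maps $f$ with $\pi(f)$ a monomorphism of $\Delta_+$) and parallel degeneracy maps (the $\pi$-vertical maps whose regular and singular slices are all degeneracy maps in $Z^{n-1}(\mathcal C)$). Degeneracy maps are monomorphisms; $\mathrm{Deg}(T)$ is the subposet of the subobject poset $\mathrm{Sub}(T)$ consisting of subobjects represented by a degeneracy map into $T$. *)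

theory Defs
  imports Main
begin

record 'u cat =
  Ob  :: "'u set"
  Ar  :: "'u set"
  Dom :: "'u \<Rightarrow> 'u"
  Cod :: "'u \<Rightarrow> 'u"
  Idn :: "'u \<Rightarrow> 'u"
  Cmp :: "'u \<Rightarrow> 'u \<Rightarrow> 'u"   (* Cmp C g f = g o f *)

definition is_cat :: "'u cat \<Rightarrow> bool" where
  "is_cat C \<longleftrightarrow>
     (\<forall>f\<in>Ar C. Dom C f \<in> Ob C \<and> Cod C f \<in> Ob C) \<and>
     (\<forall>x\<in>Ob C. Idn C x \<in> Ar C \<and> Dom C (Idn C x) = x \<and> Cod C (Idn C x) = x) \<and>
     (\<forall>f\<in>Ar C. \<forall>g\<in>Ar C. Cod C f = Dom C g \<longrightarrow>
        Cmp C g f \<in> Ar C \<and> Dom C (Cmp C g f) = Dom C f \<and> Cod C (Cmp C g f) = Cod C g) \<and>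
     (\<forall>f\<in>Ar C. \<forall>g\<in>Ar C. \<forall>h\<in>Ar C. Cod C f = Dom C g \<longrightarrow> Cod C g = Dom C h \<longrightarrow>
        Cmp C h (Cmp C g f) = Cmp C (Cmp C h g) f) \<and>
     (\<forall>f\<in>Ar C. Cmp C (Idn C (Cod C f)) f = f \<and> Cmp C f (Idn C (Dom C f)) = f)"

definition isoC :: "'u cat \<Rightarrow> 'u \<Rightarrow> bool" where
  "isoC C f \<longleftrightarrow> f \<in> Ar C \<and> (\<exists>g\<in>Ar C. Dom C g = Cod C f \<and> Cod C g = Dom C f \<and>
      Cmp C g f = Idn C (Dom C f) \<and> Cmp C f g = Idn C (Cod C f))"

definition monic :: "'u cat \<Rightarrow> 'u \<Rightarrow> bool" where
  "monic C f \<longleftrightarrow> f \<in> Ar C \<and> (\<forall>g\<in>Ar C. \<forall>h\<in>Ar C.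
      Cod C g = Dom C f \<longrightarrow> Cod C h = Dom C f \<longrightarrow> Dom C g = Dom C h \<longrightarrow>
      Cmp C f g = Cmp C f h \<longrightarrow> g = h)"

text \<open>At a: object or arrow of the base category.
  Zig rs ss xs ys: the zigzag r_0 -x_0-> s_0 <-x'_0- r_1 ... with rs = [r_0..r_n],
  ss = [s_0..s_{n-1}], xs = [x_0..x_{n-1}], ys = [x'_0..x'_{n-1}].
  Zmap X Y fs rsl ssl: zigzag map X -> Y with f_s = fs (as list of values),
  regular slices rsl = [f(r_0)..f(r_m)], singular slices ssl = [f(s_0)..f(s_{n-1})].\<close>

datatype 'a U = At 'a
  | Zig "'a U list" "'a U list" "'a U list" "'a U list"
  | Zmap "'a U" "'a U" "nat list" "'a U list" "'a U list"

fun zR :: "'a U \<Rightarrow> 'a U list" where "zR (Zig rs ss xs ys) = rs" | "zR _ = []"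
fun zS :: "'a U \<Rightarrow> 'a U list" where "zS (Zig rs ss xs ys) = ss" | "zS _ = []"
fun zX :: "'a U \<Rightarrow> 'a U list" where "zX (Zig rs ss xs ys) = xs" | "zX _ = []"
fun zY :: "'a U \<Rightarrow> 'a U list" where "zY (Zig rs ss xs ys) = ys" | "zY _ = []"
definition zlen :: "'a U \<Rightarrow> nat" where "zlen X = length (zS X)"

fun mdom :: "'a U \<Rightarrow> 'a U" where "mdom (Zmap X Y fs rsl ssl) = X" | "mdom _ = undefined"
fun mcod :: "'a U \<Rightarrow> 'a U" where "mcod (Zmap X Y fs rsl ssl) = Y" | "mcod _ = undefined"
fun mS :: "'a U \<Rightarrow> nat list" where "mS (Zmap X Y fs rsl ssl) = fs" | "mS _ = []"
fun mR :: "'a U \<Rightarrow> 'a U list" where "mR (Zmap X Y fs rsl ssl) = rsl" | "mR _ = []"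
fun mSl :: "'a U \<Rightarrow> 'a U list" where "mSl (Zmap X Y fs rsl ssl) = ssl" | "mSl _ = []"

definition hat :: "nat list \<Rightarrow> nat \<Rightarrow> nat" where
  "hat ps i = (LEAST j. j = length ps \<or> (j < length ps \<and> i \<le> ps ! j))"

definition zig_ok :: "'a U cat \<Rightarrow> 'a U \<Rightarrow> bool" where
  "zig_ok D X \<longleftrightarrow> (\<exists>rs ss xs ys. X = Zig rs ss xs ys \<and>
     length rs = Suc (length ss) \<and> length xs = length ss \<and> length ys = length ss \<and>
     set rs \<subseteq> Ob D \<and> set ss \<subseteq> Ob D \<and>
     (\<forall>i<length ss. xs!i \<in> Ar D \<and> Dom D (xs!i) = rs!i \<and> Cod D (xs!i) = ss!i \<and>
                     ys!i \<in> Ar D \<and> Dom D (ys!i) = rs!Suc i \<and> Cod D (ys!i) = ss!i))"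

definition zmap_ok :: "'a U cat \<Rightarrow> 'a U \<Rightarrow> bool" where
  "zmap_ok D f \<longleftrightarrow> (\<exists>X Y fs rsl ssl. f = Zmap X Y fs rsl ssl \<and>
     zig_ok D X \<and> zig_ok D Y \<and>
     length fs = zlen X \<and> (\<forall>j<zlen X. fs!j < zlen Y) \<and> sorted fs \<and>
     length rsl = Suc (zlen Y) \<and> length ssl = zlen X \<and>
     (\<forall>i\<le>zlen Y. rsl!i \<in> Ar D \<and> Dom D (rsl!i) = zR X ! hat fs i \<and> Cod D (rsl!i) = zR Y ! i) \<and>
     (\<forall>j<zlen X. ssl!j \<in> Ar D \<and> Dom D (ssl!j) = zS X ! j \<and> Cod D (ssl!j) = zS Y ! (fs!j)) \<and>
     (\<forall>i<zlen Y.
        (if {j. j < zlen X \<and> fs!j = i} \<noteq> {} then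
           (let p = Min {j. j < zlen X \<and> fs!j = i}; q = Max {j. j < zlen X \<and> fs!j = i} in
              Cmp D (ssl!p) (zX X ! p) = Cmp D (zX Y ! i) (rsl!i) \<and>
              Cmp D (ssl!q) (zY X ! q) = Cmp D (zY Y ! i) (rsl!Suc i) \<and>
              (\<forall>j. p \<le> j \<and> j < q \<longrightarrow> Cmp D (ssl!j) (zY X ! j) = Cmp D (ssl!Suc j) (zX X ! Suc j)))
         else Cmp D (zX Y ! i) (rsl!i) = Cmp D (zY Y ! i) (rsl!Suc i))))"

definition Zcat :: "'a U cat \<Rightarrow> 'a U cat" where
  "Zcat D = \<lparr> Ob = {X. zig_ok D X}, Ar = {f. zmap_ok D f},
     Dom = mdom, Cod = mcod,
     Idn = (\<lambda>X. Zmap X X [0..<zlen X] (map (Idn D) (zR X)) (map (Idn D) (zS X))),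
     Cmp = (\<lambda>g f. Zmap (mdom f) (mcod g) (map (\<lambda>j. mS g ! j) (mS f))
              (map (\<lambda>i. Cmp D (mR g ! i) (mR f ! hat (mS g) i)) [0..<length (mR g)])
              (map (\<lambda>j. Cmp D (mSl g ! (mS f ! j)) (mSl f ! j)) [0..<length (mS f)])) \<rparr>"

definition liftC :: "'a cat \<Rightarrow> 'a U cat" where
  "liftC C = \<lparr> Ob = At ` Ob C, Ar = At ` Ar C,
     Dom = (\<lambda>u. case u of At f \<Rightarrow> At (Dom C f) | _ \<Rightarrow> undefined),
     Cod = (\<lambda>u. case u of At f \<Rightarrow> At (Cod C f) | _ \<Rightarrow> undefined),
     Idn = (\<lambda>u. case u of At x \<Rightarrow> At (Idn C x) | _ \<Rightarrow> undefined),
     Cmp = (\<lambda>v u. case (v, u) of (At g, At f) \<Rightarrow> At (Cmp C g f) | _ \<Rightarrow> undefined) \<rparr>"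

definition Zn :: "'a cat \<Rightarrow> nat \<Rightarrow> 'a U cat" where
  "Zn C n = (Zcat ^^ n) (liftC C)"

text \<open>The functor Z^n(C) -> Z^n(1) induced by C -> 1 (1 = the terminal category with
  single object/arrow At ()): it replaces every base object/arrow by the unique one.\<close>
definition to_terminal :: "'a U \<Rightarrow> unit U" where
  "to_terminal = map_U (\<lambda>_. ())"

text \<open>pi-cocartesian arrows of Z(D) -> Delta_+.\<close>
definition cocartesian :: "'a U cat \<Rightarrow> 'a U \<Rightarrow> bool" where
  "cocartesian D f \<longleftrightarrow> f \<in> Ar (Zcat D) \<and>
    (\<forall>h\<in>Ar (Zcat D). \<forall>u. mdom h = mdom f \<longrightarrow>
       length u = zlen (mcod f) \<longrightarrow> (\<forall>j<length u. u!j < zlen (mcod h)) \<longrightarrow> sorted u \<longrightarrow>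
       map (\<lambda>j. u!j) (mS f) = mS h \<longrightarrow>
       (\<exists>!v. v \<in> Ar (Zcat D) \<and> mdom v = mcod f \<and> mcod v = mcod h \<and>
              Cmp (Zcat D) v f = h \<and> mS v = u))"

definition simple_deg :: "'a U cat \<Rightarrow> 'a U set" where
  "simple_deg D = {f. cocartesian D f \<and> distinct (mS f)}"

definition parallel_deg :: "'a U cat \<Rightarrow> 'a U set \<Rightarrow> 'a U set" where
  "parallel_deg D S = {f. f \<in> Ar (Zcat D) \<and> zlen (mcod f) = zlen (mdom f) \<and>
      mS f = [0..<zlen (mdom f)] \<and> set (mR f) \<subseteq> S \<and> set (mSl f) \<subseteq> S}"

inductive_set compgen :: "'u cat \<Rightarrow> 'u set \<Rightarrow> 'u set" for C S where
  base: "f \<in> S \<Longrightarrow> f \<in> compgen C S"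
| comp: "f \<in> compgen C S \<Longrightarrow> g \<in> compgen C S \<Longrightarrow> Cod C f = Dom C g \<Longrightarrow> Cmp C g f \<in> compgen C S"

fun deg :: "'a cat \<Rightarrow> nat \<Rightarrow> 'a U set" where
  "deg C 0 = {f. isoC (Zn C 0) f}"
| "deg C (Suc n) = compgen (Zn C (Suc n)) (simple_deg (Zn C n) \<union> parallel_deg (Zn C n) (deg C n))"

text \<open>Deg(T): subobjects of T (classes of monos into T up to isomorphism over T)
  represented by a degeneracy map.\<close>
definition subobj_class :: "'u cat \<Rightarrow> 'u \<Rightarrow> 'u set" where
  "subobj_class D f = {g. monic D g \<and> Cod D g = Cod D f \<and>
      (\<exists>\<phi>. isoC D \<phi> \<and> Dom D \<phi> = Dom D g \<and> Cod D \<phi> = Dom D f \<and> g = Cmp D f \<phi>)}"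

definition DegSub :: "'a cat \<Rightarrow> nat \<Rightarrow> 'a U \<Rightarrow> 'a U set set" where
  "DegSub C n T = subobj_class (Zn C n) ` {f \<in> deg C n. Cod (Zn C n) f = T}"

end

theory Submission
  imports Defs
begin

text \<open>
  By induction on \<open>n\<close>, the degeneracy maps of \<open>Z\<^sup>n(C)\<close> form a class \<open>P\<close> of monomorphisms
  that contains the isomorphisms, is closed under composition, and in which two maps into the
  same object with the same image in \<open>Z\<^sup>n(1)\<close> (the same shape) differ by an isomorphism of their
  domains.

  For the step from \<open>D\<close> to \<open>Z(D)\<close>, every degeneracy map \<open>f\<close> of \<open>Z(D)\<close> has injective \<open>f\<^sub>s\<close>,
  all slices in \<open>P\<close>, and \<open>y\<^sub>i \<circ> f(r\<^sub>i) \<in> P\<close> for \<open>i\<close> outside the image of \<open>f\<^sub>s\<close>; for a simple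
  degeneracy map this holds because \<open>f\<close> factors through the cocartesian lift of \<open>f\<^sub>s\<close> by an
  isomorphism. Given two such maps of the same shape, their slices pairwise differ by
  isomorphisms; as the singular slices are monic, these isomorphisms commute with the zigzag
  arrows and assemble into a vertical isomorphism of zigzags.

  Finiteness: the shape of a degeneracy map into \<open>T\<close> consists of an injective map into
  \<open>[length T]\<close> together with the shapes of its slices, which are maps in \<open>P\<close> into the finitely
  many objects of \<open>T\<close>; by induction there are finitely many of them, and maps of equal shape
  represent the same subobject.
\<close>

lemma cat_axioms:
  assumes "is_cat D"
  shows cat_dom_ob: "f \<in> Ar D \<Longrightarrow> Dom D f \<in> Ob D"
    and cat_cod_ob: "f \<in> Ar D \<Longrightarrow> Cod D f \<in> Ob D"
    and cat_idn_ar: "x \<in> Ob D \<Longrightarrow> Idn D x \<in> Ar D"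
    and cat_idn_dom: "x \<in> Ob D \<Longrightarrow> Dom D (Idn D x) = x"
    and cat_idn_cod: "x \<in> Ob D \<Longrightarrow> Cod D (Idn D x) = x"
    and cat_cmp_ar: "f \<in> Ar D \<Longrightarrow> g \<in> Ar D \<Longrightarrow> Cod D f = Dom D g \<Longrightarrow> Cmp D g f \<in> Ar D"
    and cat_cmp_dom: "f \<in> Ar D \<Longrightarrow> g \<in> Ar D \<Longrightarrow> Cod D f = Dom D g \<Longrightarrow> Dom D (Cmp D g f) = Dom D f"
    and cat_cmp_cod: "f \<in> Ar D \<Longrightarrow> g \<in> Ar D \<Longrightarrow> Cod D f = Dom D g \<Longrightarrow> Cod D (Cmp D g f) = Cod D g"
    and cat_assoc: "f \<in> Ar D \<Longrightarrow> g \<in> Ar D \<Longrightarrow> h \<in> Ar D \<Longrightarrow> Cod D f = Dom D g \<Longrightarrow> Cod D g = Dom D h \<Longrightarrow>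
        Cmp D h (Cmp D g f) = Cmp D (Cmp D h g) f"
    and cat_idl: "f \<in> Ar D \<Longrightarrow> Cmp D (Idn D (Cod D f)) f = f"
    and cat_idr: "f \<in> Ar D \<Longrightarrow> Cmp D f (Idn D (Dom D f)) = f"
  using assms unfolding is_cat_def by blast+

lemma is_catI:
  assumes "\<And>f. f \<in> Ar C \<Longrightarrow> Dom C f \<in> Ob C" "\<And>f. f \<in> Ar C \<Longrightarrow> Cod C f \<in> Ob C"
    "\<And>x. x \<in> Ob C \<Longrightarrow> Idn C x \<in> Ar C" "\<And>x. x \<in> Ob C \<Longrightarrow> Dom C (Idn C x) = x"
    "\<And>x. x \<in> Ob C \<Longrightarrow> Cod C (Idn C x) = x"
    "\<And>f g. f \<in> Ar C \<Longrightarrow> g \<in> Ar C \<Longrightarrow> Cod C f = Dom C g \<Longrightarrow> Cmp C g f \<in> Ar C"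
    "\<And>f g. f \<in> Ar C \<Longrightarrow> g \<in> Ar C \<Longrightarrow> Cod C f = Dom C g \<Longrightarrow> Dom C (Cmp C g f) = Dom C f"
    "\<And>f g. f \<in> Ar C \<Longrightarrow> g \<in> Ar C \<Longrightarrow> Cod C f = Dom C g \<Longrightarrow> Cod C (Cmp C g f) = Cod C g"
    "\<And>f g h. f \<in> Ar C \<Longrightarrow> g \<in> Ar C \<Longrightarrow> h \<in> Ar C \<Longrightarrow> Cod C f = Dom C g \<Longrightarrow> Cod C g = Dom C h \<Longrightarrow>
        Cmp C h (Cmp C g f) = Cmp C (Cmp C h g) f"
    "\<And>f. f \<in> Ar C \<Longrightarrow> Cmp C (Idn C (Cod C f)) f = f"
    "\<And>f. f \<in> Ar C \<Longrightarrow> Cmp C f (Idn C (Dom C f)) = f"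
  shows "is_cat C"
  unfolding is_cat_def by (intro conjI ballI impI; simp add: assms)

definition hom :: "'u cat \<Rightarrow> 'u \<Rightarrow> 'u \<Rightarrow> 'u \<Rightarrow> bool" where
  "hom D f a b \<longleftrightarrow> f \<in> Ar D \<and> Dom D f = a \<and> Cod D f = b"

lemma hom_cmp: "is_cat D \<Longrightarrow> hom D f a b \<Longrightarrow> hom D g b c \<Longrightarrow> hom D (Cmp D g f) a c"
  unfolding hom_def by (auto simp: cat_cmp_ar cat_cmp_dom cat_cmp_cod)

lemma hom_assoc: "is_cat D \<Longrightarrow> hom D f a b \<Longrightarrow> hom D g b c \<Longrightarrow> hom D h c d \<Longrightarrow>
   Cmp D h (Cmp D g f) = Cmp D (Cmp D h g) f"
  unfolding hom_def by (auto simp: cat_assoc)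

lemma hom_idl: "is_cat D \<Longrightarrow> hom D f a b \<Longrightarrow> Cmp D (Idn D b) f = f"
  unfolding hom_def by (auto simp: cat_idl)

lemma hom_idr: "is_cat D \<Longrightarrow> hom D f a b \<Longrightarrow> Cmp D f (Idn D a) = f"
  unfolding hom_def by (auto simp: cat_idr)

lemma hom_idn: "is_cat D \<Longrightarrow> a \<in> Ob D \<Longrightarrow> hom D (Idn D a) a a"
  unfolding hom_def by (auto simp: cat_idn_ar cat_idn_dom cat_idn_cod)

lemma monicD:
  "monic D f \<Longrightarrow> hom D a x (Dom D f) \<Longrightarrow> hom D b x (Dom D f) \<Longrightarrow> Cmp D f a = Cmp D f b \<Longrightarrow> a = b"
  unfolding monic_def hom_def by (elim conjE ballE impE) auto

lemma isoI:
  "hom D f a b \<Longrightarrow> hom D g b a \<Longrightarrow> Cmp D g f = Idn D a \<Longrightarrow> Cmp D f g = Idn D b \<Longrightarrow> isoC D f"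
  unfolding isoC_def hom_def by (elim conjE) (intro conjI bexI[of _ g]; simp)

lemma iso_hom: "isoC D f \<Longrightarrow> hom D f (Dom D f) (Cod D f)"
  unfolding isoC_def hom_def by blast

definition inv_arr :: "'u cat \<Rightarrow> 'u \<Rightarrow> 'u" where
  "inv_arr D f = (SOME g. hom D g (Cod D f) (Dom D f) \<and>
      Cmp D g f = Idn D (Dom D f) \<and> Cmp D f g = Idn D (Cod D f))"

lemma inv_arr:
  assumes iso: "isoC D f" and f: "hom D f a b"
  shows inv_arr_hom: "hom D (inv_arr D f) b a"
    and inv_arr_left: "Cmp D (inv_arr D f) f = Idn D a"
    and inv_arr_right: "Cmp D f (inv_arr D f) = Idn D b"
    and iso_inv_arr: "isoC D (inv_arr D f)"
proof -
  have ab: "Dom D f = a" "Cod D f = b" using f unfolding hom_def by simp_all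
  have "\<exists>g. hom D g b a \<and> Cmp D g f = Idn D a \<and> Cmp D f g = Idn D b"
    using iso ab unfolding isoC_def hom_def by blast
  then have inv: "hom D (inv_arr D f) b a \<and> Cmp D (inv_arr D f) f = Idn D a \<and> Cmp D f (inv_arr D f) = Idn D b"
    unfolding inv_arr_def ab by (rule someI_ex)
  then show "hom D (inv_arr D f) b a" "Cmp D (inv_arr D f) f = Idn D a" "Cmp D f (inv_arr D f) = Idn D b"
    by simp_all
  show "isoC D (inv_arr D f)" by (rule isoI[OF _ f]) (use inv in simp_all)
qed

lemma iso_monic:
  assumes D: "is_cat D" and iso: "isoC D f"
  shows "monic D f"
proof -
  note f = iso_hom[OF iso]
  note g = inv_arr[OF iso f]
  have "a = b" if "a \<in> Ar D" "b \<in> Ar D" "Cod D a = Dom D f" "Cod D b = Dom D f" "Dom D a = Dom D b"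
    and e: "Cmp D f a = Cmp D f b" for a b
  proof -
    have a: "hom D a (Dom D a) (Dom D f)" and b: "hom D b (Dom D a) (Dom D f)"
      using that unfolding hom_def by simp_all
    have "a = Cmp D (Cmp D (inv_arr D f) f) a" using g(2) hom_idl[OF D a] by simp
    also have "\<dots> = Cmp D (inv_arr D f) (Cmp D f b)" using hom_assoc[OF D a f g(1)] e by simp
    also have "\<dots> = Cmp D (Cmp D (inv_arr D f) f) b" using hom_assoc[OF D b f g(1)] by simp
    also have "\<dots> = b" using g(2) hom_idl[OF D b] by simp
    finally show "a = b" .
  qed
  then show ?thesis using f unfolding monic_def hom_def by simp
qed

lemma iso_cmp:
  assumes D: "is_cat D" and f: "isoC D f" and g: "isoC D g" and c: "Cod D f = Dom D g"
  shows "isoC D (Cmp D g f)"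
proof -
  define a b d where "a = Dom D f" and "b = Cod D f" and "d = Cod D g"
  have fh: "hom D f a b" and gh: "hom D g b d" using iso_hom[OF f] iso_hom[OF g] c a_def b_def d_def by simp_all
  note f' = inv_arr[OF f fh] and g' = inv_arr[OF g gh]
  have "Cmp D (Cmp D (inv_arr D f) (inv_arr D g)) (Cmp D g f)
      = Cmp D (inv_arr D f) (Cmp D (inv_arr D g) (Cmp D g f))"
    using hom_assoc[OF D hom_cmp[OF D fh gh] g'(1) f'(1)] by simp
  also have "\<dots> = Cmp D (inv_arr D f) (Cmp D (Cmp D (inv_arr D g) g) f)"
    using hom_assoc[OF D fh gh g'(1)] by simp
  also have "\<dots> = Idn D a" using g'(2) f'(2) hom_idl[OF D fh] by simp
  finally have l: "Cmp D (Cmp D (inv_arr D f) (inv_arr D g)) (Cmp D g f) = Idn D a" .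
  have "Cmp D (Cmp D g f) (Cmp D (inv_arr D f) (inv_arr D g))
      = Cmp D g (Cmp D f (Cmp D (inv_arr D f) (inv_arr D g)))"
    using hom_assoc[OF D hom_cmp[OF D g'(1) f'(1)] fh gh] by simp
  also have "\<dots> = Cmp D g (Cmp D (Cmp D f (inv_arr D f)) (inv_arr D g))"
    using hom_assoc[OF D g'(1) f'(1) fh] by simp
  also have "\<dots> = Idn D d" using g'(1,3) f'(3) hom_idl[OF D g'(1)] by simp
  finally have r: "Cmp D (Cmp D g f) (Cmp D (inv_arr D f) (inv_arr D g)) = Idn D d" .
  show ?thesis by (rule isoI[OF hom_cmp[OF D fh gh] hom_cmp[OF D g'(1) f'(1)] l r])
qed

lemma iso_square_inv:
  assumes D: "is_cat D" and a: "isoC D a" "hom D a x x'" and b: "isoC D b" "hom D b y y'"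
    and f: "hom D f x y" and g: "hom D g x' y'" and e: "Cmp D b f = Cmp D g a"
  shows "Cmp D (inv_arr D b) g = Cmp D f (inv_arr D a)"
proof -
  note ia = inv_arr[OF a] and ib = inv_arr[OF b]
  have "Cmp D (inv_arr D b) g = Cmp D (inv_arr D b) (Cmp D (Cmp D g a) (inv_arr D a))"
    using ia(3) hom_idr[OF D g] hom_assoc[OF D ia(1) a(2) g] by simp
  also have "\<dots> = Cmp D (Cmp D (inv_arr D b) b) (Cmp D f (inv_arr D a))"
    using e hom_assoc[OF D ia(1) f b(2)] hom_assoc[OF D hom_cmp[OF D ia(1) f] b(2) ib(1)] by simp
  also have "\<dots> = Cmp D f (inv_arr D a)"
    using ib(2) hom_idl[OF D hom_cmp[OF D ia(1) f]] by simp
  finally show ?thesis .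
qed

lemma subobj_class_subset:
  assumes D: "is_cat D" and g: "g \<in> Ar D" and \<phi>: "isoC D \<phi>" "hom D \<phi> (Dom D f) (Dom D g)"
    and f: "f = Cmp D g \<phi>"
  shows "subobj_class D f \<subseteq> subobj_class D g"
proof
  fix h assume "h \<in> subobj_class D f"
  then obtain \<psi> where h: "monic D h" "Cod D h = Cod D f" and \<psi>: "isoC D \<psi>" "hom D \<psi> (Dom D h) (Dom D f)"
    "h = Cmp D f \<psi>" unfolding subobj_class_def using iso_hom by fastforce
  have gh: "hom D g (Dom D g) (Cod D g)" using g unfolding hom_def by simp
  have "Cod D f = Cod D g" using f hom_cmp[OF D \<phi>(2) gh] unfolding hom_def by simp
  moreover have "isoC D (Cmp D \<phi> \<psi>)" using iso_cmp[OF D \<psi>(1) \<phi>(1)] \<psi>(2) \<phi>(2) by (simp add: hom_def)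
  moreover have "h = Cmp D g (Cmp D \<phi> \<psi>)" using \<psi>(3) f hom_assoc[OF D \<psi>(2) \<phi>(2) gh] by simp
  ultimately show "h \<in> subobj_class D g"
    using h hom_cmp[OF D \<psi>(2) \<phi>(2)] unfolding subobj_class_def hom_def by auto
qed

lemma map_upt_eqI: "length xs = n \<Longrightarrow> (\<And>i. i < n \<Longrightarrow> f i = xs ! i) \<Longrightarrow> map f [0..<n] = xs"
  by (rule nth_equalityI) auto

lemma sorted_distinct_nth_less_iff:
  "sorted fs \<Longrightarrow> distinct fs \<Longrightarrow> j < length fs \<Longrightarrow> k < length fs \<Longrightarrow> fs ! j < fs ! k \<longleftrightarrow> j < k"
  by (metis linorder_neqE_nat order_less_asym sorted_wrt_nth_less strict_sorted_iff)

lemma distinct_bounded_length_le: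
  assumes "distinct fs" "\<forall>j<length fs. fs ! j < m"
  shows "length fs \<le> m"
proof -
  have "set fs \<subseteq> {0..<m}" using assms(2) by (auto simp: in_set_conv_nth)
  then show ?thesis using card_mono[of "{0..<m}" "set fs"] distinct_card[OF assms(1)] by simp
qed

lemma sorted_distinct_bounded_eq_upt:
  assumes "sorted fs" "distinct fs" "length fs = n" "\<forall>j<n. fs ! j < n"
  shows "fs = [0..<n]"
proof -
  have "set fs \<subseteq> {0..<n}" using assms by (auto simp: in_set_conv_nth)
  moreover have "card (set fs) = n" using assms distinct_card by blast
  ultimately have "set fs = {0..<n}" by (simp add: card_subset_eq)
  then show ?thesis using assms sorted_distinct_set_unique[of fs "[0..<n]"] by simp
qed

section \<open>The map \<open>\<psi> \<mapsto> \<hat>\<psi>\<close>\<close>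

lemma hat_le_length: "hat fs i \<le> length fs"
  unfolding hat_def by (rule Least_le) simp

lemma hat_lt_iff:
  assumes "sorted fs"
  shows "j < hat fs i \<longleftrightarrow> j < length fs \<and> fs ! j < i"
proof
  assume j: "j < hat fs i"
  then have "\<not> (j = length fs \<or> (j < length fs \<and> i \<le> fs ! j))"
    unfolding hat_def by (rule not_less_Least)
  moreover have "j < length fs" using j hat_le_length[of fs i] by simp
  ultimately show "j < length fs \<and> fs ! j < i" by auto
next
  assume j: "j < length fs \<and> fs ! j < i"
  show "j < hat fs i"
  proof (rule ccontr)
    assume "\<not> j < hat fs i"
    moreover have "hat fs i = length fs \<or> (hat fs i < length fs \<and> i \<le> fs ! hat fs i)"
      unfolding hat_def by (rule LeastI[of _ "length fs"]) simp
    ultimately show False using j assms sorted_nth_mono[of fs "hat fs i" j] by auto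
  qed
qed

lemma hat_eqI: "sorted fs \<Longrightarrow> (\<And>j. j < k \<longleftrightarrow> j < length fs \<and> fs ! j < i) \<Longrightarrow> hat fs i = k"
  by (metis hat_lt_iff nat_neq_iff)

lemma hat_mono: "sorted fs \<Longrightarrow> i \<le> i' \<Longrightarrow> hat fs i \<le> hat fs i'"
  by (metis hat_lt_iff leI order_less_le_trans order_less_irrefl)

lemma hat_0 [simp]: "hat fs 0 = 0"
  unfolding hat_def by (rule Least_eq_0) simp

lemma hat_upt: "i \<le> n \<Longrightarrow> hat [0..<n] i = i"
  by (rule hat_eqI) auto

lemma hat_comp:
  assumes gs: "sorted gs" and hs: "sorted hs" and b: "\<forall>j<length gs. gs ! j < length hs"
  shows "hat (map (\<lambda>j. hs ! j) gs) i = hat gs (hat hs i)"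
proof -
  have s: "sorted (map (\<lambda>j. hs ! j) gs)"
    using gs hs b by (auto simp: sorted_iff_nth_mono intro: sorted_nth_mono)
  show ?thesis
    by (rule hat_eqI[OF s]) (use b in \<open>auto simp: hat_lt_iff[OF gs] hat_lt_iff[OF hs]\<close>)
qed

lemma hat_fiber:
  assumes "sorted fs"
  shows "{j. j < length fs \<and> fs ! j = i} = {hat fs i..<hat fs (Suc i)}"
proof (rule set_eqI)
  fix j
  have "j < length fs \<and> fs ! j = i \<longleftrightarrow> \<not> j < hat fs i \<and> j < hat fs (Suc i)"
    by (simp add: hat_lt_iff[OF assms] less_Suc_eq) linarith
  then show "j \<in> {j. j < length fs \<and> fs ! j = i} \<longleftrightarrow> j \<in> {hat fs i..<hat fs (Suc i)}"
    by (simp add: not_less)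
qed

lemma in_hat_fiber: "sorted fs \<Longrightarrow> hat fs i \<le> k \<Longrightarrow> k < hat fs (Suc i) \<Longrightarrow> k < length fs \<and> fs ! k = i"
  using hat_lt_iff[of fs k i] hat_lt_iff[of fs k "Suc i"] by auto

lemma hat_fiber_mem: "sorted fs \<Longrightarrow> k < length fs \<Longrightarrow> hat fs (fs ! k) \<le> k \<and> k < hat fs (Suc (fs ! k))"
  using hat_lt_iff[of fs k "fs ! k"] hat_lt_iff[of fs k "Suc (fs ! k)"] by auto

lemma hat_Suc_eq_iff:
  assumes "sorted fs"
  shows "hat fs (Suc t) = hat fs t \<longleftrightarrow> t \<notin> set fs"
proof -
  have "t \<in> set fs \<longleftrightarrow> {j. j < length fs \<and> fs ! j = t} \<noteq> {}" by (auto simp: in_set_conv_nth)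
  also have "\<dots> \<longleftrightarrow> hat fs t < hat fs (Suc t)" using hat_fiber[OF assms] by simp
  finally show ?thesis using hat_mono[OF assms, of t "Suc t"] by auto
qed

lemma hat_eq_imp_eq:
  assumes fs: "sorted fs" and E: "\<And>t. a \<le> t \<Longrightarrow> t < b \<Longrightarrow> t \<notin> set fs \<Longrightarrow> E t = E (Suc t)"
    and k: "a \<le> k" "k \<le> k'" "k' \<le> b" and h: "hat fs k = hat fs k'"
  shows "E k = E k'"
  using k(2)
proof (induction k' rule: dec_induct)
  case (step t)
  have "hat fs k \<le> hat fs t" "hat fs t \<le> hat fs (Suc t)" "hat fs (Suc t) \<le> hat fs k'"
    using step.hyps k(3) by (auto intro: hat_mono[OF fs])
  then have "t \<notin> set fs" using h hat_Suc_eq_iff[OF fs, of t] by simp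
  then show ?case using step E[of t] k by simp
qed simp

lemma hat_factorization:
  assumes fs: "sorted fs" and E: "\<And>t. t < m \<Longrightarrow> t \<notin> set fs \<Longrightarrow> E t = E (Suc t)"
  obtains E' where "\<And>i. i \<le> m \<Longrightarrow> E i = E' (hat fs i)"
proof
  fix i assume i: "i \<le> m"
  define i' where "i' = (SOME i'. i' \<le> m \<and> hat fs i' = hat fs i)"
  have i': "i' \<le> m" "hat fs i' = hat fs i"
    unfolding i'_def by (rule someI2[of _ i], use i in simp_all)+
  have "E (min i i') = E (max i i')"
    by (rule hat_eq_imp_eq[OF fs, where a = 0 and b = m]) (use E i i' in \<open>auto simp: min_def max_def\<close>)
  then show "E i = E (SOME i'. i' \<le> m \<and> hat fs i' = hat fs i)"
    unfolding i'_def[symmetric] by (simp add: min_def max_def split: if_splits)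
qed

lemma hat_nth:
  assumes "sorted fs" "distinct fs" "j < length fs"
  shows "hat fs (fs ! j) = j"
  by (rule hat_eqI[OF assms(1)]) (use assms in \<open>auto simp: sorted_distinct_nth_less_iff\<close>)

lemma hat_Suc_nth:
  assumes "sorted fs" "distinct fs" "j < length fs"
  shows "hat fs (Suc (fs ! j)) = Suc j"
proof (rule hat_eqI[OF assms(1)])
  fix k show "k < Suc j \<longleftrightarrow> k < length fs \<and> fs ! k < Suc (fs ! j)"
    using assms sorted_distinct_nth_less_iff[OF assms(1,2), of j k]
      sorted_distinct_nth_less_iff[OF assms(1,2), of k j]
    by (cases "k < length fs") auto
qed

lemma hat_at_mem:
  assumes "sorted u" "distinct u" "i \<in> set u"
  shows "hat u i < length u" "u ! hat u i = i" "hat u (Suc i) = Suc (hat u i)"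
proof -
  obtain j where "j < length u" "u ! j = i" using assms(3) by (auto simp: in_set_conv_nth)
  then show "hat u i < length u" "u ! hat u i = i" "hat u (Suc i) = Suc (hat u i)"
    using hat_nth[OF assms(1,2)] hat_Suc_nth[OF assms(1,2)] by auto
qed

lemma hat_surj:
  assumes "sorted fs" "distinct fs" "\<forall>j<length fs. fs ! j < m" "k \<le> length fs"
  shows "\<exists>i\<le>m. hat fs i = k"
proof (cases k)
  case (Suc k')
  then show ?thesis using hat_Suc_nth[OF assms(1,2), of k'] assms(3,4)
    by (intro exI[of _ "Suc (fs ! k')"]) (auto simp: Suc_le_eq)
qed auto

lemma zig_okD:
  assumes "zig_ok D X"
  shows "X = Zig (zR X) (zS X) (zX X) (zY X)" "length (zR X) = Suc (zlen X)"
    "length (zX X) = zlen X" "length (zY X) = zlen X" "set (zR X) \<subseteq> Ob D" "set (zS X) \<subseteq> Ob D"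
    "\<And>i. i < zlen X \<Longrightarrow> zX X ! i \<in> Ar D \<and> Dom D (zX X ! i) = zR X ! i \<and> Cod D (zX X ! i) = zS X ! i"
    "\<And>i. i < zlen X \<Longrightarrow> zY X ! i \<in> Ar D \<and> Dom D (zY X ! i) = zR X ! Suc i \<and> Cod D (zY X ! i) = zS X ! i"
  using assms unfolding zig_ok_def zlen_def by auto

lemma zig_okI:
  assumes "length rs = Suc (length ss)" "length xs = length ss" "length ys = length ss"
    "set rs \<subseteq> Ob D" "set ss \<subseteq> Ob D"
    "\<And>i. i < length ss \<Longrightarrow> hom D (xs ! i) (rs ! i) (ss ! i)"
    "\<And>i. i < length ss \<Longrightarrow> hom D (ys ! i) (rs ! Suc i) (ss ! i)"
  shows "zig_ok D (Zig rs ss xs ys)"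
  using assms unfolding zig_ok_def hom_def by auto

lemma zig_ob_r: "zig_ok D X \<Longrightarrow> i \<le> zlen X \<Longrightarrow> zR X ! i \<in> Ob D"
  using zig_okD(2,5)[of D X] by (metis in_mono le_imp_less_Suc nth_mem)

lemma zig_ob_s: "zig_ok D X \<Longrightarrow> i < zlen X \<Longrightarrow> zS X ! i \<in> Ob D"
  using zig_okD(6)[of D X] unfolding zlen_def by (metis in_mono nth_mem)

lemma zig_hom:
  assumes "zig_ok D X" "i < zlen X"
  shows "hom D (zX X ! i) (zR X ! i) (zS X ! i)" "hom D (zY X ! i) (zR X ! Suc i) (zS X ! i)"
  using zig_okD(7,8)[OF assms] unfolding hom_def by auto

definition zmap_typed :: "'a U cat \<Rightarrow> 'a U \<Rightarrow> 'a U \<Rightarrow> nat list \<Rightarrow> 'a U list \<Rightarrow> 'a U list \<Rightarrow> bool" where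
  "zmap_typed D X Y fs R S \<longleftrightarrow> zig_ok D X \<and> zig_ok D Y \<and>
     length fs = zlen X \<and> (\<forall>j<zlen X. fs!j < zlen Y) \<and> sorted fs \<and>
     length R = Suc (zlen Y) \<and> length S = zlen X \<and>
     (\<forall>i\<le>zlen Y. R!i \<in> Ar D \<and> Dom D (R!i) = zR X ! hat fs i \<and> Cod D (R!i) = zR Y ! i) \<and>
     (\<forall>j<zlen X. S!j \<in> Ar D \<and> Dom D (S!j) = zS X ! j \<and> Cod D (S!j) = zS Y ! (fs!j))"

lemma zmap_typedD:
  assumes "zmap_typed D X Y fs R S"
  shows "zig_ok D X" "zig_ok D Y" "length fs = zlen X" "\<And>j. j < zlen X \<Longrightarrow> fs!j < zlen Y" "sorted fs"
    "length R = Suc (zlen Y)" "length S = zlen X"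
    "\<And>i. i \<le> zlen Y \<Longrightarrow> hom D (R!i) (zR X ! hat fs i) (zR Y ! i)"
    "\<And>j. j < zlen X \<Longrightarrow> hom D (S!j) (zS X ! j) (zS Y ! (fs!j))"
  using assms unfolding zmap_typed_def hom_def by auto

lemma zmap_typedI:
  assumes "zig_ok D X" "zig_ok D Y" "length fs = zlen X" "\<And>j. j < zlen X \<Longrightarrow> fs!j < zlen Y" "sorted fs"
    "length R = Suc (zlen Y)" "length S = zlen X"
    "\<And>i. i \<le> zlen Y \<Longrightarrow> hom D (R!i) (zR X ! hat fs i) (zR Y ! i)"
    "\<And>j. j < zlen X \<Longrightarrow> hom D (S!j) (zS X ! j) (zS Y ! (fs!j))"
  shows "zmap_typed D X Y fs R S"
  using assms unfolding zmap_typed_def hom_def by auto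

definition zmap_condition :: "'a U cat \<Rightarrow> 'a U \<Rightarrow> 'a U \<Rightarrow> nat list \<Rightarrow> 'a U list \<Rightarrow> 'a U list \<Rightarrow> nat \<Rightarrow> bool" where
  "zmap_condition D X Y fs R S i \<longleftrightarrow> (if {j. j < zlen X \<and> fs!j = i} \<noteq> {} then
       (let p = Min {j. j < zlen X \<and> fs!j = i}; q = Max {j. j < zlen X \<and> fs!j = i} in
          Cmp D (S!p) (zX X ! p) = Cmp D (zX Y ! i) (R!i) \<and>
          Cmp D (S!q) (zY X ! q) = Cmp D (zY Y ! i) (R!Suc i) \<and>
          (\<forall>j. p \<le> j \<and> j < q \<longrightarrow> Cmp D (S!j) (zY X ! j) = Cmp D (S!Suc j) (zX X ! Suc j)))
     else Cmp D (zX Y ! i) (R!i) = Cmp D (zY Y ! i) (R!Suc i))"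

lemma zmap_ok_iff_condition:
  "zmap_ok D f \<longleftrightarrow> (\<exists>X Y fs R S. f = Zmap X Y fs R S \<and> zmap_typed D X Y fs R S \<and>
      (\<forall>i<zlen Y. zmap_condition D X Y fs R S i))"
  unfolding zmap_ok_def zmap_typed_def zmap_condition_def by (simp only: conj_assoc)

text \<open>The conditions on a zigzag map over \<open>i\<close> say that for every regular object \<open>X(r\<^sub>k)\<close>
  with \<open>\<hat>f\<^sub>s(i) \<le> k \<le> \<hat>f\<^sub>s(i+1)\<close> the composites from \<open>X(r\<^sub>k)\<close> to \<open>Y(s\<^sub>i)\<close> that occur agree;
  \<open>c k\<close> is this common arrow. Unlike the Min/Max form, this treats empty fibres uniformly.\<close>

definition fiber_diagonals ::
  "'a U cat \<Rightarrow> 'a U \<Rightarrow> 'a U \<Rightarrow> nat list \<Rightarrow> 'a U list \<Rightarrow> 'a U list \<Rightarrow> nat \<Rightarrow> (nat \<Rightarrow> 'a U) \<Rightarrow> bool" where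
  "fiber_diagonals D X Y fs R S i c \<longleftrightarrow> c (hat fs i) = Cmp D (zX Y ! i) (R ! i) \<and>
     c (hat fs (Suc i)) = Cmp D (zY Y ! i) (R ! Suc i) \<and>
     (\<forall>j. hat fs i \<le> j \<and> j < hat fs (Suc i) \<longrightarrow>
        Cmp D (S ! j) (zX X ! j) = c j \<and> Cmp D (S ! j) (zY X ! j) = c (Suc j))"

lemma chain_exists_iff:
  fixes u v :: "nat \<Rightarrow> 'b"
  assumes ab: "a < b"
  shows "(\<exists>c. c a = A \<and> c b = B \<and> (\<forall>j. a \<le> j \<and> j < b \<longrightarrow> u j = c j \<and> v j = c (Suc j))) \<longleftrightarrow>
    u a = A \<and> v (b - 1) = B \<and> (\<forall>j. a \<le> j \<and> j < b - 1 \<longrightarrow> v j = u (Suc j))"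
proof
  assume "\<exists>c. c a = A \<and> c b = B \<and> (\<forall>j. a \<le> j \<and> j < b \<longrightarrow> u j = c j \<and> v j = c (Suc j))"
  then obtain c where c: "c a = A" "c b = B" "\<And>j. a \<le> j \<Longrightarrow> j < b \<Longrightarrow> u j = c j \<and> v j = c (Suc j)"
    by blast
  have "v (b - 1) = c (Suc (b - 1))" using c(3)[of "b - 1"] ab by simp
  moreover have "v j = u (Suc j)" if "a \<le> j" "j < b - 1" for j
    using c(3)[of j] c(3)[of "Suc j"] that by simp
  ultimately show "u a = A \<and> v (b - 1) = B \<and> (\<forall>j. a \<le> j \<and> j < b - 1 \<longrightarrow> v j = u (Suc j))"
    using c(1,2) c(3)[of a] ab by simp
next
  assume h: "u a = A \<and> v (b - 1) = B \<and> (\<forall>j. a \<le> j \<and> j < b - 1 \<longrightarrow> v j = u (Suc j))"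
  have "v j = (if Suc j < b then u (Suc j) else B)" if "a \<le> j" "j < b" for j
  proof (cases "Suc j < b")
    case False
    then have "j = b - 1" using that by simp
    then show ?thesis using h False by simp
  qed (use h that in simp)
  then show "\<exists>c. c a = A \<and> c b = B \<and> (\<forall>j. a \<le> j \<and> j < b \<longrightarrow> u j = c j \<and> v j = c (Suc j))"
    using h ab by (intro exI[of _ "\<lambda>k. if k < b then u k else B"]) auto
qed

lemma zmap_condition_iff:
  assumes fs: "sorted fs" "length fs = zlen X"
  shows "zmap_condition D X Y fs R S i \<longleftrightarrow> (\<exists>c. fiber_diagonals D X Y fs R S i c)"
proof -
  define a b where "a = hat fs i" and "b = hat fs (Suc i)"
  have fib: "{j. j < zlen X \<and> fs!j = i} = {a..<b}" using hat_fiber[OF fs(1), of i] fs(2) a_def b_def by simp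
  show ?thesis
  proof (cases "a < b")
    case True
    have "Min {a..<b} = a" "Max {a..<b} = b - 1" using True by (auto intro!: Min_eqI Max_eqI)
    moreover note chain_exists_iff[OF True, where A = "Cmp D (zX Y ! i) (R ! i)"
      and B = "Cmp D (zY Y ! i) (R ! Suc i)" and u = "\<lambda>j. Cmp D (S ! j) (zX X ! j)"
      and v = "\<lambda>j. Cmp D (S ! j) (zY X ! j)"]
    ultimately show ?thesis using True
      unfolding zmap_condition_def fiber_diagonals_def fib a_def[symmetric] b_def[symmetric]
      by (simp add: Let_def)
  next
    case False
    then have "a = b" using hat_mono[OF fs(1), of i "Suc i"] a_def b_def by simp
    then show ?thesis unfolding zmap_condition_def fiber_diagonals_def fib
      by (auto simp: a_def b_def)
  qed
qed

lemma zmap_ok_iff: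
  "zmap_ok D f \<longleftrightarrow> (\<exists>X Y fs R S. f = Zmap X Y fs R S \<and> zmap_typed D X Y fs R S \<and>
      (\<forall>i<zlen Y. \<exists>c. fiber_diagonals D X Y fs R S i c))"
  unfolding zmap_ok_iff_condition by (auto simp: zmap_typed_def zmap_condition_iff)

lemma zmap_okD:
  assumes "zmap_ok D (Zmap X Y fs R S)"
  shows "zmap_typed D X Y fs R S" "\<And>i. i < zlen Y \<Longrightarrow> \<exists>c. fiber_diagonals D X Y fs R S i c"
  using assms unfolding zmap_ok_iff by auto

lemma zmap_okI:
  assumes "zmap_typed D X Y fs R S" "\<And>i. i < zlen Y \<Longrightarrow> \<exists>c. fiber_diagonals D X Y fs R S i c"
  shows "zmap_ok D (Zmap X Y fs R S)"
  using assms unfolding zmap_ok_iff by blast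

lemma zmap_okE:
  assumes "zmap_ok D f"
  obtains X Y fs R S where "f = Zmap X Y fs R S" "zmap_ok D (Zmap X Y fs R S)"
  using assms unfolding zmap_ok_iff by blast

lemma fiber_diagonals_nonimage:
  assumes "sorted fs" "i \<notin> set fs"
  shows "(\<exists>c. fiber_diagonals D X Y fs R S i c) \<longleftrightarrow> Cmp D (zX Y ! i) (R ! i) = Cmp D (zY Y ! i) (R ! Suc i)"
  using hat_Suc_eq_iff[OF assms(1), of i] assms(2) unfolding fiber_diagonals_def by auto

lemma fiber_diagonals_image:
  assumes "sorted fs" "distinct fs" "j < length fs"
  shows "(\<exists>c. fiber_diagonals D X Y fs R S (fs ! j) c) \<longleftrightarrow>
    Cmp D (S ! j) (zX X ! j) = Cmp D (zX Y ! (fs ! j)) (R ! (fs ! j)) \<and>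
    Cmp D (S ! j) (zY X ! j) = Cmp D (zY Y ! (fs ! j)) (R ! Suc (fs ! j))"
  unfolding fiber_diagonals_def hat_nth[OF assms] hat_Suc_nth[OF assms]
  using chain_exists_iff[of j "Suc j", where A = "Cmp D (zX Y ! (fs ! j)) (R ! (fs ! j))"
      and B = "Cmp D (zY Y ! (fs ! j)) (R ! Suc (fs ! j))" and u = "\<lambda>j. Cmp D (S ! j) (zX X ! j)"
      and v = "\<lambda>j. Cmp D (S ! j) (zY X ! j)"]
  by simp (meson leD)

text \<open>For injective \<open>f\<^sub>s\<close> every fibre has at most one element.\<close>

lemma zmap_ok_injective_iff:
  assumes t: "zmap_typed D X Y fs R S" and d: "distinct fs"
  shows "zmap_ok D (Zmap X Y fs R S) \<longleftrightarrow>
    (\<forall>j<zlen X. Cmp D (S ! j) (zX X ! j) = Cmp D (zX Y ! (fs ! j)) (R ! (fs ! j)) \<and>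
                Cmp D (S ! j) (zY X ! j) = Cmp D (zY Y ! (fs ! j)) (R ! Suc (fs ! j))) \<and>
    (\<forall>i<zlen Y. i \<notin> set fs \<longrightarrow> Cmp D (zX Y ! i) (R ! i) = Cmp D (zY Y ! i) (R ! Suc i))"
proof -
  note tD = zmap_typedD[OF t]
  have image: "(\<exists>c. fiber_diagonals D X Y fs R S (fs ! j) c) \<longleftrightarrow>
      Cmp D (S ! j) (zX X ! j) = Cmp D (zX Y ! (fs ! j)) (R ! (fs ! j)) \<and>
      Cmp D (S ! j) (zY X ! j) = Cmp D (zY Y ! (fs ! j)) (R ! Suc (fs ! j))" if "j < zlen X" for j
    using fiber_diagonals_image[OF tD(5) d] tD(3) that by simp
  have "zmap_ok D (Zmap X Y fs R S) \<longleftrightarrow> (\<forall>i<zlen Y. \<exists>c. fiber_diagonals D X Y fs R S i c)"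
    unfolding zmap_ok_iff using t by simp
  also have "\<dots> \<longleftrightarrow> (\<forall>j<zlen X. \<exists>c. fiber_diagonals D X Y fs R S (fs ! j) c) \<and>
      (\<forall>i<zlen Y. i \<notin> set fs \<longrightarrow> (\<exists>c. fiber_diagonals D X Y fs R S i c))"
    using tD(3,4) by (auto simp: in_set_conv_nth)
  also have "\<dots> \<longleftrightarrow> (\<forall>j<zlen X. Cmp D (S ! j) (zX X ! j) = Cmp D (zX Y ! (fs ! j)) (R ! (fs ! j)) \<and>
                Cmp D (S ! j) (zY X ! j) = Cmp D (zY Y ! (fs ! j)) (R ! Suc (fs ! j))) \<and>
      (\<forall>i<zlen Y. i \<notin> set fs \<longrightarrow> Cmp D (zX Y ! i) (R ! i) = Cmp D (zY Y ! i) (R ! Suc i))"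
    using image fiber_diagonals_nonimage[OF tD(5), where D = D and X = X and Y = Y and R = R and S = S]
    by auto
  finally show ?thesis .
qed

section \<open>The category \<open>Z(D)\<close>\<close>

lemma Zcat_simps [simp]:
  "Ob (Zcat D) = {X. zig_ok D X}" "Ar (Zcat D) = {f. zmap_ok D f}" "Dom (Zcat D) = mdom" "Cod (Zcat D) = mcod"
  "Idn (Zcat D) X = Zmap X X [0..<zlen X] (map (Idn D) (zR X)) (map (Idn D) (zS X))"
  "Cmp (Zcat D) g f = Zmap (mdom f) (mcod g) (map (\<lambda>j. mS g ! j) (mS f))
     (map (\<lambda>i. Cmp D (mR g ! i) (mR f ! hat (mS g) i)) [0..<length (mR g)])
     (map (\<lambda>j. Cmp D (mSl g ! (mS f ! j)) (mSl f ! j)) [0..<length (mS f)])"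
  by (simp_all add: Zcat_def)

lemma Zcat_cmp_sel:
  "mdom (Cmp (Zcat D) g f) = mdom f" "mcod (Cmp (Zcat D) g f) = mcod g"
  "mS (Cmp (Zcat D) g f) = map (\<lambda>j. mS g ! j) (mS f)"
  by simp_all

lemma zmap_typed_comp:
  assumes D: "is_cat D" and f: "zmap_typed D X Y fs R S" and g: "zmap_typed D Y Z gs R' S'"
  shows "zmap_typed D X Z (map (\<lambda>j. gs!j) fs) (map (\<lambda>i. Cmp D (R'!i) (R ! hat gs i)) [0..<Suc (zlen Z)])
            (map (\<lambda>j. Cmp D (S' ! (fs!j)) (S!j)) [0..<zlen X])"
proof (rule zmap_typedI)
  note fD = zmap_typedD[OF f] and gD = zmap_typedD[OF g]
  show "sorted (map ((!) gs) fs)"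
    using fD gD by (auto simp: sorted_iff_nth_mono intro: sorted_nth_mono)
  fix i assume i: "i \<le> zlen Z"
  have "hat gs i \<le> zlen Y" using hat_le_length[of gs i] gD by simp
  moreover have "\<forall>j<length fs. fs ! j < length gs" using fD(3,4) gD(3) by simp
  ultimately show "hom D (map (\<lambda>i. Cmp D (R' ! i) (R ! hat gs i)) [0..<Suc (zlen Z)] ! i)
      (zR X ! hat (map ((!) gs) fs) i) (zR Z ! i)"
    using hom_cmp[OF D fD(8) gD(8)[OF i]] i hat_comp[OF fD(5) gD(5)]
    by (simp add: nth_map_upt less_Suc_eq_le del: upt_Suc)
next
  note fD = zmap_typedD[OF f] and gD = zmap_typedD[OF g]
  fix j assume j: "j < zlen X"
  show "hom D (map (\<lambda>j. Cmp D (S' ! (fs ! j)) (S ! j)) [0..<zlen X] ! j) (zS X ! j)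
      (zS Z ! (map ((!) gs) fs ! j))"
    using hom_cmp[OF D fD(9)[OF j] gD(9)[OF fD(4)[OF j]]] j fD(3) by simp
qed (use zmap_typedD[OF f] zmap_typedD[OF g] in auto)

text \<open>The diagonals of \<open>g \<circ> f\<close> over \<open>i\<close> are those of \<open>f\<close> over the fibre \<open>[a, b)\<close> of \<open>g\<^sub>s\<close>
  above \<open>i\<close>, composed with \<open>g(s\<^sub>k)\<close>; where two of these chains meet, both agree with
  \<open>E k = c k \<circ> f(r\<^sub>k)\<close>, and \<open>E k = E k'\<close> whenever \<open>\<hat>f\<^sub>s(k) = \<hat>f\<^sub>s(k')\<close>.\<close>

lemma fiber_diagonals_comp:
  assumes D: "is_cat D" and f: "zmap_typed D X Y fs R S" and g: "zmap_typed D Y Z gs R' S'"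
    and cf: "\<And>k. k < zlen Y \<Longrightarrow> fiber_diagonals D X Y fs R S k (cf k)"
    and c: "fiber_diagonals D Y Z gs R' S' i c" and i: "i < zlen Z"
  shows "\<exists>C. fiber_diagonals D X Z (map (\<lambda>j. gs!j) fs)
    (map (\<lambda>i. Cmp D (R'!i) (R ! hat gs i)) [0..<Suc (zlen Z)])
    (map (\<lambda>j. Cmp D (S' ! (fs!j)) (S!j)) [0..<zlen X]) i C"
proof -
  note fD = zmap_typedD[OF f] and gD = zmap_typedD[OF g]
  have fs_gs: "\<forall>j<length fs. fs ! j < length gs" using fD(3,4) gD(3) by simp
  define a b where "a = hat gs i" and "b = hat gs (Suc i)"
  define A B where "A = hat fs a" and "B = hat fs b"
  have ab: "a \<le> b" "b \<le> zlen Y"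
    using hat_mono[OF gD(5), of i "Suc i"] hat_le_length[of gs] gD(3) a_def b_def by simp_all
  have B: "A \<le> B" "B \<le> zlen X"
    using hat_mono[OF fD(5) ab(1)] hat_le_length[of fs] fD(3) A_def B_def by simp_all
  have S'h: "hom D (S' ! k) (zS Y ! k) (zS Z ! i)" if "a \<le> k" "k < b" for k
    using in_hat_fiber[OF gD(5), of i k] gD(9)[of k] gD(3) that a_def b_def by simp
  define E where "E k = Cmp D (c k) (R ! k)" for k
  have E_start: "Cmp D (S'!k) (cf k (hat fs k)) = E k"
    and E_end: "Cmp D (S'!k) (cf k (hat fs (Suc k))) = E (Suc k)" if k: "a \<le> k" "k < b" for k
  proof -
    have kY: "k < zlen Y" using k ab by simp
    have "c k = Cmp D (S' ! k) (zX Y ! k)" "c (Suc k) = Cmp D (S' ! k) (zY Y ! k)"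
      using c k unfolding fiber_diagonals_def a_def b_def by simp_all
    moreover have "cf k (hat fs k) = Cmp D (zX Y ! k) (R ! k)"
      "cf k (hat fs (Suc k)) = Cmp D (zY Y ! k) (R ! Suc k)"
      using cf[OF kY] unfolding fiber_diagonals_def by simp_all
    ultimately show "Cmp D (S'!k) (cf k (hat fs k)) = E k" "Cmp D (S'!k) (cf k (hat fs (Suc k))) = E (Suc k)"
      unfolding E_def using hom_assoc[OF D fD(8) zig_hom(1)[OF gD(1) kY] S'h[OF k]]
        hom_assoc[OF D fD(8) zig_hom(2)[OF gD(1) kY] S'h[OF k]] kY by simp_all
  qed
  have E_const: "E k = E k'" if "a \<le> k" "k \<le> k'" "k' \<le> b" "hat fs k = hat fs k'" for k k'
  proof (rule hat_eq_imp_eq[OF fD(5) _ that])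
    fix t assume "a \<le> t" "t < b" "t \<notin> set fs"
    then show "E t = E (Suc t)" using E_start E_end hat_Suc_eq_iff[OF fD(5), of t] by metis
  qed
  define C where "C t = (if t < B then Cmp D (S' ! (fs ! t)) (cf (fs ! t) t) else E b)" for t
  have range: "a \<le> fs ! t \<and> fs ! t < b \<and> t < zlen X" if "A \<le> t" "t < B" for t
    using hat_lt_iff[OF fD(5), of t a] hat_lt_iff[OF fD(5), of t b] that A_def B_def fD(3) by auto
  have C_hat: "C (hat fs k) = E k" if k: "a \<le> k" "k \<le> b" for k
  proof (cases "hat fs k < B")
    case True
    define k' where "k' = fs ! hat fs k"
    have "A \<le> hat fs k" using hat_mono[OF fD(5) k(1)] A_def by simp
    then have k': "a \<le> k'" "k' < b" "hat fs k < zlen X" using range True k'_def by auto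
    have "k \<le> k'" using hat_lt_iff[OF fD(5), of "hat fs k" k] k' k'_def fD(3) by simp
    moreover have "hat fs k' \<le> hat fs k" using hat_fiber_mem[OF fD(5), of "hat fs k"] k'(3) fD(3) k'_def by simp
    ultimately have "hat fs k' = hat fs k" using hat_mono[OF fD(5), of k k'] by simp
    then have "C (hat fs k) = E k'" using E_start[OF k'(1,2)] True k'_def C_def by simp
    also have "\<dots> = E k" using E_const[of k k'] \<open>k \<le> k'\<close> \<open>hat fs k' = hat fs k\<close> k k' by simp
    finally show ?thesis .
  next
    case False
    then have "hat fs k = B" using hat_mono[OF fD(5) k(2)] B_def by simp
    then show ?thesis using E_const[of k b] k B_def C_def by simp
  qed
  have C_squares: "Cmp D (Cmp D (S' ! (fs ! j)) (S ! j)) (zX X ! j) = C j \<and>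
      Cmp D (Cmp D (S' ! (fs ! j)) (S ! j)) (zY X ! j) = C (Suc j)" if j: "A \<le> j" "j < B" for j
  proof -
    define k where "k = fs ! j"
    have k: "a \<le> k" "k < b" "j < zlen X" using range[OF j] k_def by auto
    have fib: "hat fs k \<le> j" "j < hat fs (Suc k)" using hat_fiber_mem[OF fD(5), of j] k fD(3) k_def by auto
    have "Cmp D (S ! j) (zX X ! j) = cf k j" "Cmp D (S ! j) (zY X ! j) = cf k (Suc j)"
      using cf[of k] fib k ab unfolding fiber_diagonals_def by auto
    then have sq: "Cmp D (Cmp D (S' ! k) (S ! j)) (zX X ! j) = Cmp D (S' ! k) (cf k j)"
      "Cmp D (Cmp D (S' ! k) (S ! j)) (zY X ! j) = Cmp D (S' ! k) (cf k (Suc j))"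
      using hom_assoc[OF D zig_hom(1)[OF fD(1) k(3)] fD(9)[OF k(3)]]
        hom_assoc[OF D zig_hom(2)[OF fD(1) k(3)] fD(9)[OF k(3)]] S'h[OF k(1,2)] k_def by simp_all
    have "Cmp D (S' ! k) (cf k (Suc j)) = C (Suc j)"
    proof (cases "Suc j < hat fs (Suc k)")
      case True
      then have "fs ! Suc j = k" "Suc j < B"
        using in_hat_fiber[OF fD(5), of k "Suc j"] fib hat_mono[OF fD(5), of "Suc k" b] k(2) B_def by auto
      then show ?thesis using C_def by simp
    next
      case False
      then have "Suc j = hat fs (Suc k)" using fib by simp
      then show ?thesis using C_hat[of "Suc k"] E_end[OF k(1,2)] k by simp
    qed
    moreover have "Cmp D (S' ! k) (cf k j) = C j" using j k_def C_def by simp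
    ultimately show ?thesis using sq k_def by simp
  qed
  have R'': "map (\<lambda>i. Cmp D (R'!i) (R ! hat gs i)) [0..<Suc (zlen Z)] ! i = Cmp D (R'!i) (R ! a)"
    "map (\<lambda>i. Cmp D (R'!i) (R ! hat gs i)) [0..<Suc (zlen Z)] ! Suc i = Cmp D (R'!Suc i) (R ! b)"
    using i a_def b_def by (simp_all add: nth_map_upt del: upt_Suc)
  have "c a = Cmp D (zX Z ! i) (R' ! i)" "c b = Cmp D (zY Z ! i) (R' ! Suc i)"
    using c unfolding fiber_diagonals_def a_def b_def by simp_all
  then have "E a = Cmp D (zX Z ! i) (Cmp D (R'!i) (R ! a))" "E b = Cmp D (zY Z ! i) (Cmp D (R'!Suc i) (R ! b))"
    unfolding E_def
    using hom_assoc[OF D fD(8)[of a] gD(8)[OF less_imp_le[OF i], folded a_def] zig_hom(1)[OF gD(2) i]]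
      hom_assoc[OF D fD(8)[of b] gD(8)[OF Suc_leI[OF i], folded b_def] zig_hom(2)[OF gD(2) i]] ab
    by simp_all
  moreover have "C A = E a" using C_hat[of a] ab A_def by simp
  moreover have "C B = E b" by (simp add: C_def)
  ultimately have "fiber_diagonals D X Z (map (\<lambda>j. gs!j) fs)
    (map (\<lambda>i. Cmp D (R'!i) (R ! hat gs i)) [0..<Suc (zlen Z)])
    (map (\<lambda>j. Cmp D (S' ! (fs!j)) (S!j)) [0..<zlen X]) i C"
    unfolding fiber_diagonals_def hat_comp[OF fD(5) gD(5) fs_gs]
      a_def[symmetric] b_def[symmetric] A_def[symmetric] B_def[symmetric] R''
    using C_squares B(2) by auto
  then show ?thesis by blast
qed

lemma Zcat_cmp_eq:
  assumes "zmap_ok D (Zmap X Y fs R S)" "zmap_ok D (Zmap Y Z gs R' S')"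
  shows "Cmp (Zcat D) (Zmap Y Z gs R' S') (Zmap X Y fs R S) =
    Zmap X Z (map (\<lambda>j. gs!j) fs) (map (\<lambda>i. Cmp D (R'!i) (R ! hat gs i)) [0..<Suc (zlen Z)])
      (map (\<lambda>j. Cmp D (S' ! (fs!j)) (S!j)) [0..<zlen X])"
  using zmap_typedD(3,6)[OF zmap_okD(1)[OF assms(1)]] zmap_typedD(3,6)[OF zmap_okD(1)[OF assms(2)]] by simp

lemma Zcat_cmp_ok:
  assumes D: "is_cat D" and f: "zmap_ok D (Zmap X Y fs R S)" and g: "zmap_ok D (Zmap Y Z gs R' S')"
  shows "zmap_ok D (Cmp (Zcat D) (Zmap Y Z gs R' S') (Zmap X Y fs R S))"
proof -
  note tf = zmap_okD(1)[OF f] and tg = zmap_okD(1)[OF g]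
  obtain cf where cf: "\<And>k. k < zlen Y \<Longrightarrow> fiber_diagonals D X Y fs R S k (cf k)"
    using zmap_okD(2)[OF f] by metis
  show ?thesis unfolding Zcat_cmp_eq[OF f g]
  proof (rule zmap_okI[OF zmap_typed_comp[OF D tf tg]])
    fix i assume i: "i < zlen Z"
    then obtain c where "fiber_diagonals D Y Z gs R' S' i c" using zmap_okD(2)[OF g] by blast
    from fiber_diagonals_comp[OF D tf tg cf this i] show "\<exists>c. fiber_diagonals D X Z (map ((!) gs) fs)
       (map (\<lambda>i. Cmp D (R' ! i) (R ! hat gs i)) [0..<Suc (zlen Z)])
       (map (\<lambda>j. Cmp D (S' ! (fs ! j)) (S ! j)) [0..<zlen X]) i c" .
  qed
qed

lemma zmap_typed_verticalI:
  assumes "zig_ok D X" "zig_ok D Y" "zlen Y = zlen X" "length R = Suc (zlen X)" "length S = zlen X"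
    "\<And>i. i \<le> zlen X \<Longrightarrow> hom D (R ! i) (zR X ! i) (zR Y ! i)"
    "\<And>j. j < zlen X \<Longrightarrow> hom D (S ! j) (zS X ! j) (zS Y ! j)"
  shows "zmap_typed D X Y [0..<zlen X] R S"
  by (rule zmap_typedI) (use assms hat_upt in auto)

lemma zmap_ok_vertical_iff:
  assumes "zmap_typed D X Y [0..<zlen X] R S" "zlen Y = zlen X"
  shows "zmap_ok D (Zmap X Y [0..<zlen X] R S) \<longleftrightarrow>
    (\<forall>j<zlen X. Cmp D (S ! j) (zX X ! j) = Cmp D (zX Y ! j) (R ! j) \<and>
                Cmp D (S ! j) (zY X ! j) = Cmp D (zY Y ! j) (R ! Suc j))"
  using zmap_ok_injective_iff[OF assms(1)] assms(2) by simp

lemma Zcat_idn_ok: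
  assumes D: "is_cat D" and X: "zig_ok D X"
  shows "zmap_ok D (Idn (Zcat D) X)"
proof -
  note xD = zig_okD[OF X]
  have lengths: "length (zR X) = Suc (zlen X)" "length (zS X) = zlen X" using xD(2) by (simp_all add: zlen_def)
  have t: "zmap_typed D X X [0..<zlen X] (map (Idn D) (zR X)) (map (Idn D) (zS X))"
    by (rule zmap_typed_verticalI)
      (use X lengths hom_idn[OF D zig_ob_r[OF X]] hom_idn[OF D zig_ob_s[OF X]] in \<open>auto simp: less_Suc_eq_le\<close>)
  show ?thesis unfolding Zcat_simps zmap_ok_vertical_iff[OF t refl]
    using hom_idl[OF D zig_hom(1)[OF X]] hom_idr[OF D zig_hom(1)[OF X]]
      hom_idl[OF D zig_hom(2)[OF X]] hom_idr[OF D zig_hom(2)[OF X]] lengths by simp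
qed

lemma Zcat_assoc:
  assumes D: "is_cat D" and f: "zmap_ok D (Zmap W X fs R S)" and g: "zmap_ok D (Zmap X Y gs R' S')"
    and h: "zmap_ok D (Zmap Y Z hs R'' S'')"
  shows "Cmp (Zcat D) (Zmap Y Z hs R'' S'') (Cmp (Zcat D) (Zmap X Y gs R' S') (Zmap W X fs R S)) =
         Cmp (Zcat D) (Cmp (Zcat D) (Zmap Y Z hs R'' S'') (Zmap X Y gs R' S')) (Zmap W X fs R S)"
proof -
  note fD = zmap_typedD[OF zmap_okD(1)[OF f]] and gD = zmap_typedD[OF zmap_okD(1)[OF g]]
    and hD = zmap_typedD[OF zmap_okD(1)[OF h]]
  have hat_hg: "hat (map (\<lambda>j. hs!j) gs) i = hat gs (hat hs i)" for i
    by (rule hat_comp) (use gD hD in auto)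
  have "map (\<lambda>j. hs!j) (map (\<lambda>j. gs!j) fs) = map (\<lambda>j. (map (\<lambda>j. hs!j) gs)!j) fs"
    using fD(3,4) gD(3) by (auto simp: in_set_conv_nth)
  moreover have "map (\<lambda>i. Cmp D (R''!i) ((map (\<lambda>i. Cmp D (R'!i) (R ! hat gs i)) [0..<Suc (zlen Y)]) ! hat hs i))
      [0..<Suc (zlen Z)]
    = map (\<lambda>i. Cmp D ((map (\<lambda>i. Cmp D (R''!i) (R' ! hat hs i)) [0..<Suc (zlen Z)])!i)
      (R ! hat (map (\<lambda>j. hs!j) gs) i)) [0..<Suc (zlen Z)]"
  proof (rule map_cong[OF refl])
    fix i assume "i \<in> set [0..<Suc (zlen Z)]"
    then have i: "i \<le> zlen Z" by (simp del: upt_Suc)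
    have "hat hs i \<le> zlen Y" "hat gs (hat hs i) \<le> zlen X"
      using hat_le_length[of hs i] hat_le_length[of gs "hat hs i"] hD(3) gD(3) by simp_all
    then show "Cmp D (R''!i) ((map (\<lambda>i. Cmp D (R'!i) (R ! hat gs i)) [0..<Suc (zlen Y)]) ! hat hs i) =
        Cmp D ((map (\<lambda>i. Cmp D (R''!i) (R' ! hat hs i)) [0..<Suc (zlen Z)])!i) (R ! hat (map (\<lambda>j. hs!j) gs) i)"
      using hom_assoc[OF D fD(8) gD(8) hD(8)[OF i]] i
      by (simp add: hat_hg nth_map_upt less_Suc_eq_le del: upt_Suc)
  qed
  moreover have "map (\<lambda>j. Cmp D (S'' ! ((map (\<lambda>j. gs!j) fs)!j)) ((map (\<lambda>j. Cmp D (S' ! (fs!j)) (S!j)) [0..<zlen W])!j))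
      [0..<zlen W]
    = map (\<lambda>j. Cmp D ((map (\<lambda>j. Cmp D (S'' ! (gs!j)) (S'!j)) [0..<zlen X]) ! (fs!j)) (S!j)) [0..<zlen W]"
  proof (rule map_cong[OF refl])
    fix j assume "j \<in> set [0..<zlen W]"
    then have j: "j < zlen W" by simp
    then show "Cmp D (S'' ! ((map (\<lambda>j. gs!j) fs)!j)) ((map (\<lambda>j. Cmp D (S' ! (fs!j)) (S!j)) [0..<zlen W])!j) =
        Cmp D ((map (\<lambda>j. Cmp D (S'' ! (gs!j)) (S'!j)) [0..<zlen X]) ! (fs!j)) (S!j)"
      using hom_assoc[OF D fD(9)[OF j] gD(9)[OF fD(4)[OF j]] hD(9)[OF gD(4)[OF fD(4)[OF j]]]] fD(3,4) by simp
  qed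
  ultimately show ?thesis
    unfolding Zcat_cmp_eq[OF f g] Zcat_cmp_eq[OF g h]
      Zcat_cmp_eq[OF Zcat_cmp_ok[OF D f g, unfolded Zcat_cmp_eq[OF f g]] h]
      Zcat_cmp_eq[OF f Zcat_cmp_ok[OF D g h, unfolded Zcat_cmp_eq[OF g h]]]
    by simp
qed

lemma Zcat_idl:
  assumes D: "is_cat D" and f: "zmap_ok D (Zmap X Y fs R S)"
  shows "Cmp (Zcat D) (Idn (Zcat D) Y) (Zmap X Y fs R S) = Zmap X Y fs R S"
proof -
  note fD = zmap_typedD[OF zmap_okD(1)[OF f]]
  have "length (zR Y) = Suc (zlen Y)" "length (zS Y) = zlen Y" using zig_okD(2)[OF fD(2)] by (simp_all add: zlen_def)
  moreover have "map (\<lambda>i. Cmp D (map (Idn D) (zR Y) ! i) (R ! hat [0..<zlen Y] i)) [0..<Suc (zlen Y)] = R"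
    by (rule map_upt_eqI)
      (use fD hom_idl[OF D fD(8)] hat_upt zig_okD(2)[OF fD(2)] in \<open>auto simp: less_Suc_eq_le\<close>)
  moreover have "map (\<lambda>j. Cmp D (map (Idn D) (zS Y) ! (fs ! j)) (S ! j)) [0..<zlen X] = S"
    by (rule map_upt_eqI) (use fD hom_idl[OF D fD(9)] in \<open>auto simp: zlen_def\<close>)
  moreover have "map (\<lambda>j. [0..<zlen Y] ! j) fs = fs"
    using fD by (auto intro!: nth_equalityI)
  ultimately show ?thesis using fD(3,6) by simp
qed

lemma Zcat_idr:
  assumes D: "is_cat D" and f: "zmap_ok D (Zmap X Y fs R S)"
  shows "Cmp (Zcat D) (Zmap X Y fs R S) (Idn (Zcat D) X) = Zmap X Y fs R S"
proof -
  note fD = zmap_typedD[OF zmap_okD(1)[OF f]]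
  have lX: "length (zR X) = Suc (zlen X)" "length (zS X) = zlen X" using zig_okD(2)[OF fD(1)] by (simp_all add: zlen_def)
  have "map (\<lambda>i. Cmp D (R ! i) (map (Idn D) (zR X) ! hat fs i)) [0..<Suc (zlen Y)] = R"
  proof (rule map_upt_eqI)
    fix i assume "i < Suc (zlen Y)"
    moreover have "hat fs i < Suc (zlen X)" using hat_le_length[of fs i] fD(3) by simp
    ultimately show "Cmp D (R ! i) (map (Idn D) (zR X) ! hat fs i) = R ! i"
      using hom_idr[OF D fD(8)] lX by simp
  qed (use fD in simp)
  moreover have "map (\<lambda>j. Cmp D (S ! ([0..<zlen X] ! j)) (map (Idn D) (zS X) ! j)) [0..<zlen X] = S"
    by (rule map_upt_eqI) (use fD hom_idr[OF D fD(9)] lX in auto)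
  moreover have "map (\<lambda>j. fs ! j) [0..<zlen X] = fs"
    using fD by (auto intro!: nth_equalityI)
  ultimately show ?thesis using fD(6) lX by simp
qed

lemma Zcat_is_cat:
  assumes D: "is_cat D"
  shows "is_cat (Zcat D)"
proof (rule is_catI)
  fix f assume "f \<in> Ar (Zcat D)"
  then obtain X Y fs R S where e: "f = Zmap X Y fs R S" and ok: "zmap_ok D (Zmap X Y fs R S)"
    using zmap_okE by (metis Zcat_simps(2) mem_Collect_eq)
  note fD = zmap_typedD[OF zmap_okD(1)[OF ok]]
  show "Dom (Zcat D) f \<in> Ob (Zcat D)" "Cod (Zcat D) f \<in> Ob (Zcat D)" using e fD by simp_all
  show "Cmp (Zcat D) (Idn (Zcat D) (Cod (Zcat D) f)) f = f" using Zcat_idl[OF D ok] e by simp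
  show "Cmp (Zcat D) f (Idn (Zcat D) (Dom (Zcat D) f)) = f" using Zcat_idr[OF D ok] e by simp
next
  fix x assume "x \<in> Ob (Zcat D)"
  then show "Idn (Zcat D) x \<in> Ar (Zcat D)" using Zcat_idn_ok[OF D] by simp
  show "Dom (Zcat D) (Idn (Zcat D) x) = x" "Cod (Zcat D) (Idn (Zcat D) x) = x" by simp_all
next
  fix f g assume "f \<in> Ar (Zcat D)" "g \<in> Ar (Zcat D)" and c: "Cod (Zcat D) f = Dom (Zcat D) g"
  then obtain X Y fs R S Z gs R' S' where e: "f = Zmap X Y fs R S" "g = Zmap Y Z gs R' S'"
    and ok: "zmap_ok D (Zmap X Y fs R S)" "zmap_ok D (Zmap Y Z gs R' S')"
    using zmap_okE by (metis Zcat_simps(2,3,4) mcod.simps mdom.simps mem_Collect_eq)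
  show "Cmp (Zcat D) g f \<in> Ar (Zcat D)" using Zcat_cmp_ok[OF D ok] e by simp
  show "Dom (Zcat D) (Cmp (Zcat D) g f) = Dom (Zcat D) f" "Cod (Zcat D) (Cmp (Zcat D) g f) = Cod (Zcat D) g"
    by simp_all
next
  fix f g h assume "f \<in> Ar (Zcat D)" "g \<in> Ar (Zcat D)" "h \<in> Ar (Zcat D)"
    and c: "Cod (Zcat D) f = Dom (Zcat D) g" "Cod (Zcat D) g = Dom (Zcat D) h"
  then obtain W X Y Z fs R S gs R' S' hs R'' S'' where
    e: "f = Zmap W X fs R S" "g = Zmap X Y gs R' S'" "h = Zmap Y Z hs R'' S''"
    and ok: "zmap_ok D (Zmap W X fs R S)" "zmap_ok D (Zmap X Y gs R' S')" "zmap_ok D (Zmap Y Z hs R'' S'')"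
    using zmap_okE by (metis Zcat_simps(2,3,4) mcod.simps mdom.simps mem_Collect_eq)
  show "Cmp (Zcat D) h (Cmp (Zcat D) g f) = Cmp (Zcat D) (Cmp (Zcat D) h g) f"
    using Zcat_assoc[OF D ok] e by simp
qed

lemma liftC_is_cat:
  assumes C: "is_cat C"
  shows "is_cat (liftC C)"
proof (rule is_catI)
  fix f assume "f \<in> Ar (liftC C)"
  then obtain a where "f = At a" "a \<in> Ar C" unfolding liftC_def by auto
  then show "Dom (liftC C) f \<in> Ob (liftC C)" "Cod (liftC C) f \<in> Ob (liftC C)"
    "Cmp (liftC C) (Idn (liftC C) (Cod (liftC C) f)) f = f" "Cmp (liftC C) f (Idn (liftC C) (Dom (liftC C) f)) = f"
    using C unfolding liftC_def by (auto simp: cat_dom_ob cat_cod_ob cat_idl cat_idr)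
next
  fix x assume "x \<in> Ob (liftC C)"
  then obtain a where "x = At a" "a \<in> Ob C" unfolding liftC_def by auto
  then show "Idn (liftC C) x \<in> Ar (liftC C)" "Dom (liftC C) (Idn (liftC C) x) = x" "Cod (liftC C) (Idn (liftC C) x) = x"
    using C unfolding liftC_def by (auto simp: cat_idn_ar cat_idn_dom cat_idn_cod)
next
  fix f g assume "f \<in> Ar (liftC C)" "g \<in> Ar (liftC C)" and c: "Cod (liftC C) f = Dom (liftC C) g"
  then obtain a b where "f = At a" "a \<in> Ar C" "g = At b" "b \<in> Ar C" "Cod C a = Dom C b"
    unfolding liftC_def by auto
  then show "Cmp (liftC C) g f \<in> Ar (liftC C)" "Dom (liftC C) (Cmp (liftC C) g f) = Dom (liftC C) f"
    "Cod (liftC C) (Cmp (liftC C) g f) = Cod (liftC C) g"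
    using C unfolding liftC_def by (auto simp: cat_cmp_ar cat_cmp_dom cat_cmp_cod)
next
  fix f g h assume "f \<in> Ar (liftC C)" "g \<in> Ar (liftC C)" "h \<in> Ar (liftC C)"
    and c: "Cod (liftC C) f = Dom (liftC C) g" "Cod (liftC C) g = Dom (liftC C) h"
  then obtain a b d where "f = At a" "a \<in> Ar C" "g = At b" "b \<in> Ar C" "h = At d" "d \<in> Ar C"
    "Cod C a = Dom C b" "Cod C b = Dom C d"
    unfolding liftC_def by auto
  then show "Cmp (liftC C) h (Cmp (liftC C) g f) = Cmp (liftC C) (Cmp (liftC C) h g) f"
    using C unfolding liftC_def by (auto simp: cat_assoc)
qed

lemma Zn_0: "Zn C 0 = liftC C"
  unfolding Zn_def by simp

lemma Zn_Suc: "Zn C (Suc n) = Zcat (Zn C n)"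
  unfolding Zn_def by simp

section \<open>Degeneracy maps\<close>

definition deg_class :: "'a U cat \<Rightarrow> 'a U set \<Rightarrow> bool" where
  "deg_class D P \<longleftrightarrow> is_cat D \<and> P \<subseteq> Ar D \<and> (\<forall>f\<in>P. monic D f) \<and> (\<forall>f. isoC D f \<longrightarrow> f \<in> P) \<and>
     (\<forall>f\<in>P. \<forall>g\<in>P. Cod D f = Dom D g \<longrightarrow> Cmp D g f \<in> P) \<and>
     (\<forall>f\<in>P. \<forall>g\<in>P. Cod D f = Cod D g \<longrightarrow> to_terminal f = to_terminal g \<longrightarrow>
        (\<exists>\<phi>. isoC D \<phi> \<and> Dom D \<phi> = Dom D f \<and> Cod D \<phi> = Dom D g \<and> f = Cmp D g \<phi>))"

lemma deg_classD:
  assumes "deg_class D P"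
  shows "is_cat D" "\<And>f. f \<in> P \<Longrightarrow> f \<in> Ar D" "\<And>f. f \<in> P \<Longrightarrow> monic D f" "\<And>f. isoC D f \<Longrightarrow> f \<in> P"
  using assms unfolding deg_class_def by blast+

lemma deg_class_cmp:
  assumes "deg_class D P" "f \<in> P" "g \<in> P" "hom D f a b" "hom D g b c"
  shows "Cmp D g f \<in> P"
proof -
  have "Cod D f = Dom D g" using assms(4,5) by (simp add: hom_def)
  then show ?thesis using assms(1-3) unfolding deg_class_def by blast
qed

lemma deg_class_unique:
  assumes "deg_class D P" "f \<in> P" "g \<in> P" "Cod D f = Cod D g" "to_terminal f = to_terminal g"
  obtains \<phi> where "isoC D \<phi>" "hom D \<phi> (Dom D f) (Dom D g)" "f = Cmp D g \<phi>"
proof -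
  obtain \<phi> where "isoC D \<phi>" "Dom D \<phi> = Dom D f" "Cod D \<phi> = Dom D g" "f = Cmp D g \<phi>"
    using assms unfolding deg_class_def by blast
  then show ?thesis using that iso_hom[of D \<phi>] by simp
qed

lemma deg_class_unique_hom:
  assumes P: "deg_class D P" and fg: "f \<in> P" "g \<in> P" "hom D f a c" "hom D g b c"
    and tt: "to_terminal f = to_terminal g"
  shows "\<exists>\<phi>. isoC D \<phi> \<and> hom D \<phi> a b \<and> f = Cmp D g \<phi>"
proof -
  have "Cod D f = Cod D g" "Dom D f = a" "Dom D g = b" using fg(3,4) by (simp_all add: hom_def)
  then show ?thesis using deg_class_unique[OF P fg(1,2) _ tt] by metis
qed

text \<open>Every degeneracy map of \<open>Z(D)\<close> has this form when \<open>P\<close> is the class of degeneracy maps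
  of \<open>D\<close>.\<close>

definition deg_zmap :: "'a U cat \<Rightarrow> 'a U set \<Rightarrow> 'a U \<Rightarrow> bool" where
  "deg_zmap D P f \<longleftrightarrow> zmap_ok D f \<and> distinct (mS f) \<and> set (mR f) \<subseteq> P \<and> set (mSl f) \<subseteq> P \<and>
     (\<forall>i<zlen (mcod f). i \<notin> set (mS f) \<longrightarrow> Cmp D (zX (mcod f) ! i) (mR f ! i) \<in> P)"

lemma deg_zmap_Zmap:
  "deg_zmap D P (Zmap X Y fs R S) \<longleftrightarrow> zmap_ok D (Zmap X Y fs R S) \<and> distinct fs \<and>
     set R \<subseteq> P \<and> set S \<subseteq> P \<and> (\<forall>i<zlen Y. i \<notin> set fs \<longrightarrow> Cmp D (zX Y ! i) (R ! i) \<in> P)"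
  unfolding deg_zmap_def by simp

lemma parallel_deg_zmap: "f \<in> parallel_deg D P \<Longrightarrow> deg_zmap D P f"
  unfolding parallel_deg_def deg_zmap_def by auto

lemma deg_zmap_comp:
  assumes P: "deg_class D P" and f: "deg_zmap D P (Zmap X Y fs R S)" and g: "deg_zmap D P (Zmap Y Z gs R' S')"
  shows "deg_zmap D P (Cmp (Zcat D) (Zmap Y Z gs R' S') (Zmap X Y fs R S))"
proof -
  note D = deg_classD(1)[OF P]
  have okf: "zmap_ok D (Zmap X Y fs R S)" and df: "distinct fs" and Rf: "set R \<subseteq> P" and Sf: "set S \<subseteq> P"
    and nf: "\<And>i. i < zlen Y \<Longrightarrow> i \<notin> set fs \<Longrightarrow> Cmp D (zX Y ! i) (R ! i) \<in> P"
    using f unfolding deg_zmap_Zmap by auto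
  have okg: "zmap_ok D (Zmap Y Z gs R' S')" and dg: "distinct gs" and Rg: "set R' \<subseteq> P" and Sg: "set S' \<subseteq> P"
    and ng: "\<And>i. i < zlen Z \<Longrightarrow> i \<notin> set gs \<Longrightarrow> Cmp D (zX Z ! i) (R' ! i) \<in> P"
    using g unfolding deg_zmap_Zmap by auto
  note tf = zmap_okD(1)[OF okf] and tg = zmap_okD(1)[OF okg]
  note fD = zmap_typedD[OF tf] and gD = zmap_typedD[OF tg]
  have RP: "R ! i \<in> P" if "i \<le> zlen Y" for i using Rf that fD(6) by (simp add: subset_iff)
  have SP: "S ! j \<in> P" if "j < zlen X" for j using Sf that fD(7) by (simp add: subset_iff)
  have R'P: "R' ! i \<in> P" if "i \<le> zlen Z" for i using Rg that gD(6) by (simp add: subset_iff)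
  have S'P: "S' ! j \<in> P" if "j < zlen Y" for j using Sg that gD(7) by (simp add: subset_iff)
  have "inj_on (\<lambda>j. gs!j) (set fs)"
    using dg fD gD by (auto simp: inj_on_def in_set_conv_nth nth_eq_iff_index_eq)
  then have dist: "distinct (map (\<lambda>j. gs!j) fs)" using df by (simp add: distinct_map)
  have RC: "Cmp D (R'!i) (R ! hat gs i) \<in> P" if i: "i \<le> zlen Z" for i
  proof -
    have "hat gs i \<le> zlen Y" using hat_le_length[of gs i] gD by simp
    then show ?thesis using deg_class_cmp[OF P RP R'P[OF i] fD(8) gD(8)[OF i]] by simp
  qed
  have SC: "Cmp D (S' ! (fs!j)) (S!j) \<in> P" if j: "j < zlen X" for j
    using deg_class_cmp[OF P SP[OF j] S'P[OF fD(4)[OF j]] fD(9)[OF j] gD(9)[OF fD(4)[OF j]]] .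
  have NC: "Cmp D (zX Z ! i) (Cmp D (R'!i) (R ! hat gs i)) \<in> P"
    if i: "i < zlen Z" "i \<notin> set (map (\<lambda>j. gs!j) fs)" for i
  proof -
    have hi: "hat gs i \<le> zlen Y" using hat_le_length[of gs i] gD by simp
    note xR' = hom_cmp[OF D gD(8)[OF less_imp_le[OF i(1)]] zig_hom(1)[OF gD(2) i(1)]]
    have as: "Cmp D (zX Z ! i) (Cmp D (R'!i) (R ! hat gs i)) = Cmp D (Cmp D (zX Z ! i) (R'!i)) (R ! hat gs i)"
      by (rule hom_assoc[OF D fD(8)[OF hi] gD(8) zig_hom(1)[OF gD(2) i(1)]]) (use i in simp)
    show ?thesis
    proof (cases "i \<in> set gs")
      case False
      then show ?thesis using as deg_class_cmp[OF P RP[OF hi] ng[OF i(1) False] fD(8)[OF hi] xR'] by simp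
    next
      case True
      then obtain k where k: "k < zlen Y" "i = gs ! k" using gD(3) by (auto simp: in_set_conv_nth)
      have hk: "hat gs i = k" using hat_nth[OF gD(5) dg] k gD(3) by simp
      have kf: "k \<notin> set fs" using i(2) k by auto
      have sq: "Cmp D (S'!k) (zX Y ! k) = Cmp D (zX Z ! i) (R'!i)"
        using zmap_ok_injective_iff[OF tg dg] okg k by simp
      have "Cmp D (S'!k) (Cmp D (zX Y ! k) (R ! k)) \<in> P"
        using deg_class_cmp[OF P nf[OF k(1) kf] S'P[OF k(1)]
            hom_cmp[OF D fD(8)[of k] zig_hom(1)[OF gD(1) k(1)]] gD(9)[OF k(1)]] k by simp
      then show ?thesis
        using as sq hk hom_assoc[OF D fD(8)[of k] zig_hom(1)[OF gD(1) k(1)] gD(9)[OF k(1)]] k by simp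
    qed
  qed
  show ?thesis
    unfolding Zcat_cmp_eq[OF okf okg] deg_zmap_Zmap
    using Zcat_cmp_ok[OF D okf okg, unfolded Zcat_cmp_eq[OF okf okg]] dist RC SC NC
    by (auto simp: nth_map_upt less_Suc_eq_le simp del: upt_Suc)
qed

lemma deg_zmap_cancel:
  assumes P: "deg_class D P" and f: "deg_zmap D P (Zmap X Y fs R S)"
    and a: "zmap_ok D (Zmap W X as Ra Sa)" and b: "zmap_ok D (Zmap W X bs Rb Sb)"
    and e: "Cmp (Zcat D) (Zmap X Y fs R S) (Zmap W X as Ra Sa) = Cmp (Zcat D) (Zmap X Y fs R S) (Zmap W X bs Rb Sb)"
  shows "as = bs \<and> Ra = Rb \<and> Sa = Sb"
proof -
  have okf: "zmap_ok D (Zmap X Y fs R S)" and df: "distinct fs" and Rf: "set R \<subseteq> P" and Sf: "set S \<subseteq> P"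
    using f unfolding deg_zmap_Zmap by auto
  note fD = zmap_typedD[OF zmap_okD(1)[OF okf]]
    and aD = zmap_typedD[OF zmap_okD(1)[OF a]] and bD = zmap_typedD[OF zmap_okD(1)[OF b]]
  have e1: "map (\<lambda>j. fs!j) as = map (\<lambda>j. fs!j) bs"
    and e2: "\<And>i. i \<le> zlen Y \<Longrightarrow> Cmp D (R!i) (Ra ! hat fs i) = Cmp D (R!i) (Rb ! hat fs i)"
    and e3: "\<And>j. j < zlen W \<Longrightarrow> Cmp D (S ! (as!j)) (Sa!j) = Cmp D (S ! (bs!j)) (Sb!j)"
    using e unfolding Zcat_cmp_eq[OF a okf] Zcat_cmp_eq[OF b okf]
    by (auto simp: list_eq_iff_nth_eq less_Suc_eq_le simp del: upt_Suc)
  have as_bs: "as = bs"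
  proof (rule nth_equalityI)
    show "length as = length bs" using aD(3) bD(3) by simp
    fix j assume j: "j < length as"
    have "fs ! (as ! j) = fs ! (bs ! j)" using e1 j aD(3) bD(3) by (metis length_map nth_map)
    then show "as ! j = bs ! j" using df aD(3,4) bD(3,4) j fD(3) by (simp add: nth_eq_iff_index_eq)
  qed
  have "Sa ! j = Sb ! j" if j: "j < zlen W" for j
  proof (rule monicD[OF deg_classD(3)[OF P]])
    show "S ! (as ! j) \<in> P" using Sf aD(4)[OF j] fD(7) by (simp add: subset_iff)
    show "hom D (Sa ! j) (zS W ! j) (Dom D (S ! (as ! j)))" "hom D (Sb ! j) (zS W ! j) (Dom D (S ! (as ! j)))"
      using aD(9)[OF j] bD(9)[OF j] fD(9)[OF aD(4)[OF j]] as_bs by (simp_all add: hom_def)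
  qed (use e3[OF j] as_bs in simp)
  then have Sa_Sb: "Sa = Sb" using aD(7) bD(7) by (simp add: nth_equalityI)
  have "Ra ! k = Rb ! k" if k: "k \<le> zlen X" for k
  proof -
    obtain i where i: "i \<le> zlen Y" "hat fs i = k"
      using hat_surj[OF fD(5) df, of "zlen Y" k] fD(3,4) k by auto
    show ?thesis
    proof (rule monicD[OF deg_classD(3)[OF P]])
      show "R ! i \<in> P" using Rf i(1) fD(6) by (simp add: subset_iff)
      show "hom D (Ra ! k) (zR W ! hat as k) (Dom D (R ! i))" "hom D (Rb ! k) (zR W ! hat as k) (Dom D (R ! i))"
        using aD(8)[OF k] bD(8)[OF k] fD(8)[OF i(1)] i(2) as_bs by (simp_all add: hom_def)
    qed (use e2[OF i(1)] i(2) in simp)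
  qed
  then have "Ra = Rb" using aD(6) bD(6) by (simp add: nth_equalityI less_Suc_eq_le)
  then show ?thesis using as_bs Sa_Sb by simp
qed

lemma deg_zmap_monic:
  assumes P: "deg_class D P" and f: "deg_zmap D P f"
  shows "monic (Zcat D) f"
  unfolding monic_def
proof (intro conjI ballI impI)
  show "f \<in> Ar (Zcat D)" using f unfolding deg_zmap_def by simp
  fix a b assume "a \<in> Ar (Zcat D)" "b \<in> Ar (Zcat D)"
    and c: "Cod (Zcat D) a = Dom (Zcat D) f" "Cod (Zcat D) b = Dom (Zcat D) f" "Dom (Zcat D) a = Dom (Zcat D) b"
    and e: "Cmp (Zcat D) f a = Cmp (Zcat D) f b"
  then obtain W X Y fs R S as Ra Sa bs Rb Sb where
    ab: "a = Zmap W X as Ra Sa" "b = Zmap W X bs Rb Sb" "f = Zmap X Y fs R S"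
    and ok: "zmap_ok D (Zmap W X as Ra Sa)" "zmap_ok D (Zmap W X bs Rb Sb)"
    using f zmap_okE unfolding deg_zmap_def
    by (metis Zcat_simps(2,3,4) mcod.simps mdom.simps mem_Collect_eq)
  show "a = b" using deg_zmap_cancel[OF P f[unfolded ab(3)] ok] e ab by simp
qed

lemma vertical_iso:
  assumes D: "is_cat D" and f: "zmap_ok D (Zmap X Y [0..<zlen X] R S)" and n: "zlen Y = zlen X"
    and R: "\<And>i. i \<le> zlen X \<Longrightarrow> isoC D (R!i)" and S: "\<And>j. j < zlen X \<Longrightarrow> isoC D (S!j)"
  shows "isoC (Zcat D) (Zmap X Y [0..<zlen X] R S)"
proof -
  note t = zmap_okD(1)[OF f]
  note tD = zmap_typedD[OF t]
  have Rh: "hom D (R!i) (zR X ! i) (zR Y ! i)" if "i \<le> zlen X" for i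
    using tD(8)[of i] that n hat_upt[OF that] by simp
  have Sh: "hom D (S!j) (zS X ! j) (zS Y ! j)" if "j < zlen X" for j
    using tD(9)[of j] that by simp
  define R' where "R' = map (\<lambda>i. inv_arr D (R!i)) [0..<Suc (zlen X)]"
  define S' where "S' = map (\<lambda>j. inv_arr D (S!j)) [0..<zlen X]"
  have R': "R'!i = inv_arr D (R!i)" if "i \<le> zlen X" for i
    unfolding R'_def using that by (simp add: nth_map_upt less_Suc_eq_le del: upt_Suc)
  have S': "S'!j = inv_arr D (S!j)" if "j < zlen X" for j
    unfolding S'_def using that by simp
  note R_inv = inv_arr[OF R Rh] and S_inv = inv_arr[OF S Sh]
  have tg: "zmap_typed D Y X [0..<zlen Y] R' S'"
    by (rule zmap_typed_verticalI) (use tD n R_inv(1) S_inv(1) R' S' in \<open>auto simp: R'_def S'_def\<close>)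
  have "Cmp D (S!j) (zX X ! j) = Cmp D (zX Y ! j) (R!j)" "Cmp D (S!j) (zY X ! j) = Cmp D (zY Y ! j) (R!Suc j)"
    if "j < zlen X" for j
    using f that unfolding zmap_ok_vertical_iff[OF t n] by simp_all
  then have "Cmp D (S'!j) (zX Y ! j) = Cmp D (zX X ! j) (R'!j) \<and> Cmp D (S'!j) (zY Y ! j) = Cmp D (zY X ! j) (R'!Suc j)"
    if j: "j < zlen X" for j
    using iso_square_inv[OF D R[of j] Rh[of j] S[OF j] Sh[OF j] zig_hom(1)[OF tD(1) j] zig_hom(1)[OF tD(2)]]
      iso_square_inv[OF D R[of "Suc j"] Rh[of "Suc j"] S[OF j] Sh[OF j] zig_hom(2)[OF tD(1) j] zig_hom(2)[OF tD(2)]]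
      R'[of j] R'[of "Suc j"] S'[OF j] j n by simp
  then have g: "zmap_ok D (Zmap Y X [0..<zlen Y] R' S')"
    by (subst zmap_ok_vertical_iff[OF tg n[symmetric]]) (simp add: n)
  have lengths: "length (zR X) = Suc (zlen X)" "length (zS X) = zlen X"
    "length (zR Y) = Suc (zlen X)" "length (zS Y) = zlen X"
    using zig_okD(2)[OF tD(1)] zig_okD(2)[OF tD(2)] n by (simp_all add: zlen_def)
  have gf: "Cmp (Zcat D) (Zmap Y X [0..<zlen X] R' S') (Zmap X Y [0..<zlen X] R S) = Idn (Zcat D) X"
    using Zcat_cmp_eq[OF f g[unfolded n]] R_inv(2) S_inv(2) R' S' lengths
    by (auto simp: hat_upt less_Suc_eq_le intro!: map_upt_eqI simp del: upt_Suc)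
  have fg: "Cmp (Zcat D) (Zmap X Y [0..<zlen X] R S) (Zmap Y X [0..<zlen X] R' S') = Idn (Zcat D) Y"
    using Zcat_cmp_eq[OF g[unfolded n] f] R_inv(3) S_inv(3) R' S' lengths n
    by (auto simp: hat_upt less_Suc_eq_le intro!: map_upt_eqI simp del: upt_Suc)
  show ?thesis by (rule isoI[OF _ _ gf fg]) (use f g n in \<open>simp_all add: hom_def\<close>)
qed

lemma Zcat_iso_parallel_deg:
  assumes D: "is_cat D" and P: "\<And>f. isoC D f \<Longrightarrow> f \<in> P" and iso: "isoC (Zcat D) f"
  shows "f \<in> parallel_deg D P"
proof -
  have "f \<in> Ar (Zcat D)" using iso unfolding isoC_def by blast
  then obtain X Y fs R S where ef: "f = Zmap X Y fs R S" and okf: "zmap_ok D (Zmap X Y fs R S)"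
    using zmap_okE by (metis Zcat_simps(2) mem_Collect_eq)
  have fh: "hom (Zcat D) f X Y" using okf ef by (simp add: hom_def)
  note g = inv_arr[OF iso fh]
  obtain gs R' S' where eg: "inv_arr (Zcat D) f = Zmap Y X gs R' S'" and okg: "zmap_ok D (Zmap Y X gs R' S')"
    using g(1) zmap_okE[of D "inv_arr (Zcat D) f"] unfolding hom_def by (metis Zcat_simps mcod.simps mdom.simps mem_Collect_eq)
  note fD = zmap_typedD[OF zmap_okD(1)[OF okf]] and gD = zmap_typedD[OF zmap_okD(1)[OF okg]]
  have gf: "Zmap X X (map (\<lambda>j. gs!j) fs) (map (\<lambda>i. Cmp D (R'!i) (R ! hat gs i)) [0..<Suc (zlen X)])
      (map (\<lambda>j. Cmp D (S' ! (fs!j)) (S!j)) [0..<zlen X])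
    = Zmap X X [0..<zlen X] (map (Idn D) (zR X)) (map (Idn D) (zS X))"
    using g(2)[unfolded eg] unfolding ef Zcat_cmp_eq[OF okf okg] by simp
  have fg: "Zmap Y Y (map (\<lambda>j. fs!j) gs) (map (\<lambda>i. Cmp D (R!i) (R' ! hat fs i)) [0..<Suc (zlen Y)])
      (map (\<lambda>j. Cmp D (S ! (gs!j)) (S'!j)) [0..<zlen Y])
    = Zmap Y Y [0..<zlen Y] (map (Idn D) (zR Y)) (map (Idn D) (zS Y))"
    using g(3)[unfolded eg] unfolding ef Zcat_cmp_eq[OF okg okf] by simp
  have "distinct fs" "distinct gs"
    using gf fg fD(3) gD(3) distinct_map[of "\<lambda>j. gs!j" fs] distinct_map[of "\<lambda>j. fs!j" gs] by simp_all
  moreover have "length fs \<le> zlen Y" "length gs \<le> zlen X"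
    using distinct_bounded_length_le[of fs "zlen Y"] distinct_bounded_length_le[of gs "zlen X"]
      calculation fD(3,4) gD(3,4) by simp_all
  ultimately have n: "zlen Y = zlen X" and fs: "fs = [0..<zlen X]" and gs: "gs = [0..<zlen X]"
    using sorted_distinct_bounded_eq_upt[OF fD(5)] sorted_distinct_bounded_eq_upt[OF gD(5)] fD(3,4) gD(3,4)
    by simp_all
  have lengths: "length (zR X) = Suc (zlen X)" "length (zS X) = zlen X"
    "length (zR Y) = Suc (zlen X)" "length (zS Y) = zlen X"
    using zig_okD(2)[OF fD(1)] zig_okD(2)[OF fD(2)] n by (simp_all add: zlen_def)
  have "isoC D (R ! i)" if i: "i \<le> zlen X" for i
  proof (rule isoI)
    show "hom D (R!i) (zR X ! i) (zR Y ! i)" "hom D (R'!i) (zR Y ! i) (zR X ! i)"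
      using fD(8)[of i] gD(8)[of i] i n hat_upt[OF i] fs gs by simp_all
    show "Cmp D (R'!i) (R!i) = Idn D (zR X ! i)" "Cmp D (R!i) (R'!i) = Idn D (zR Y ! i)"
      using arg_cong[where f="\<lambda>t. mR t ! i", OF gf] arg_cong[where f="\<lambda>t. mR t ! i", OF fg]
        i hat_upt[OF i] fs gs n lengths by (simp_all add: nth_map_upt less_Suc_eq_le del: upt_Suc)
  qed
  moreover have "isoC D (S ! j)" if j: "j < zlen X" for j
  proof (rule isoI)
    show "hom D (S!j) (zS X ! j) (zS Y ! j)" "hom D (S'!j) (zS Y ! j) (zS X ! j)"
      using fD(9)[of j] gD(9)[of j] j n fs gs by simp_all
    show "Cmp D (S'!j) (S!j) = Idn D (zS X ! j)" "Cmp D (S!j) (S'!j) = Idn D (zS Y ! j)"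
      using arg_cong[where f="\<lambda>t. mSl t ! j", OF gf] arg_cong[where f="\<lambda>t. mSl t ! j", OF fg]
        j fs gs n lengths by simp_all
  qed
  ultimately have "set R \<subseteq> P" "set S \<subseteq> P" using P fD(6,7) n by (auto simp: in_set_conv_nth less_Suc_eq_le)
  then show ?thesis unfolding parallel_deg_def using ef okf fs n by simp
qed

text \<open>Slice-wise factorisations of \<open>f\<close> through \<open>g\<close> by isomorphisms assemble into a vertical
  isomorphism of zigzags; the squares it needs commute because the singular slices of \<open>g\<close> are
  monic.\<close>

lemma deg_zmap_vertical_factor:
  assumes P: "deg_class D P" and f: "deg_zmap D P (Zmap X T fs R S)" and g: "deg_zmap D P (Zmap Y T fs R' S')"
    and \<sigma>: "\<And>j. j < zlen X \<Longrightarrow> isoC D (\<sigma> j) \<and> hom D (\<sigma> j) (zS X ! j) (zS Y ! j) \<and> S ! j = Cmp D (S' ! j) (\<sigma> j)"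
    and \<rho>: "\<And>k. k \<le> zlen X \<Longrightarrow> isoC D (\<rho> k) \<and> hom D (\<rho> k) (zR X ! k) (zR Y ! k)"
    and R: "\<And>i. i \<le> zlen T \<Longrightarrow> R ! i = Cmp D (R' ! i) (\<rho> (hat fs i))"
  shows "\<exists>\<phi>. isoC (Zcat D) \<phi> \<and> hom (Zcat D) \<phi> X Y \<and> Zmap X T fs R S = Cmp (Zcat D) (Zmap Y T fs R' S') \<phi>"
proof -
  note D = deg_classD(1)[OF P]
  have okf: "zmap_ok D (Zmap X T fs R S)" and df: "distinct fs" and okg: "zmap_ok D (Zmap Y T fs R' S')"
    and S'P: "set S' \<subseteq> P" using f g unfolding deg_zmap_Zmap by auto
  note tf = zmap_okD(1)[OF okf] and tg = zmap_okD(1)[OF okg]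
  note fD = zmap_typedD[OF tf] and gD = zmap_typedD[OF tg]
  define n where "n = zlen X"
  have nY: "zlen Y = n" using fD(3) gD(3) n_def by simp
  define \<phi> where "\<phi> = Zmap X Y [0..<n] (map \<rho> [0..<Suc n]) (map \<sigma> [0..<n])"
  have \<rho>n: "map \<rho> [0..<Suc n] ! k = \<rho> k" if "k \<le> n" for k
    using that by (simp add: nth_map_upt less_Suc_eq_le del: upt_Suc)
  have t\<phi>: "zmap_typed D X Y [0..<zlen X] (map \<rho> [0..<Suc n]) (map \<sigma> [0..<n])"
    by (rule zmap_typed_verticalI) (use fD gD nY \<rho> \<rho>n \<sigma> n_def in auto)
  have "Cmp D (\<sigma> j) (zX X ! j) = Cmp D (zX Y ! j) (\<rho> j) \<and> Cmp D (\<sigma> j) (zY X ! j) = Cmp D (zY Y ! j) (\<rho> (Suc j))"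
    if j: "j < n" for j
  proof -
    define t where "t = fs ! j"
    have t: "t < zlen T" "hat fs t = j" "hat fs (Suc t) = Suc j"
      using fD(4)[of j] hat_nth[OF fD(5) df] hat_Suc_nth[OF fD(5) df] j fD(3) n_def t_def by auto
    have M: "monic D (S' ! j)" using deg_classD(3)[OF P] S'P gD(7) j nY by (simp add: subset_iff)
    have f_sq: "Cmp D (S!j) (zX X ! j) = Cmp D (zX T ! t) (R!t)" "Cmp D (S!j) (zY X ! j) = Cmp D (zY T ! t) (R!Suc t)"
      using okf j unfolding zmap_ok_injective_iff[OF tf df] n_def t_def by simp_all
    have g_sq: "Cmp D (S'!j) (zX Y ! j) = Cmp D (zX T ! t) (R'!t)" "Cmp D (S'!j) (zY Y ! j) = Cmp D (zY T ! t) (R'!Suc t)"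
      using okg j nY unfolding zmap_ok_injective_iff[OF tg df] t_def by simp_all
    have S'h: "hom D (S'!j) (zS Y ! j) (zS T ! t)" using gD(9)[of j] j nY t_def by simp
    note \<sigma>j = \<sigma>[OF j[unfolded n_def]]
      and \<rho>j = \<rho>[OF less_imp_le[OF j[unfolded n_def]]] \<rho>[OF Suc_leI[OF j[unfolded n_def]]]
    have R't: "hom D (R'!t) (zR Y ! j) (zR T ! t)" "hom D (R'!Suc t) (zR Y ! Suc j) (zR T ! Suc t)"
      using gD(8)[of t] gD(8)[of "Suc t"] t by (simp_all add: Suc_le_eq)
    note xX = zig_hom[OF fD(1) j[unfolded n_def]] and xY = zig_hom[OF gD(1) j[folded nY]]
      and xT = zig_hom[OF fD(2) t(1)]
    have dom: "Dom D (S' ! j) = zS Y ! j" using S'h by (simp add: hom_def)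
    have e1: "Cmp D (S'!j) (Cmp D (\<sigma> j) (zX X ! j)) = Cmp D (S'!j) (Cmp D (zX Y ! j) (\<rho> j))"
      using hom_assoc[OF D xX(1) conjunct1[OF conjunct2[OF \<sigma>j]] S'h] \<sigma>j f_sq(1) R[of t] t
        hom_assoc[OF D conjunct2[OF \<rho>j(1)] R't(1) xT(1)] g_sq(1)
        hom_assoc[OF D conjunct2[OF \<rho>j(1)] xY(1) S'h] j n_def by simp
    have e2: "Cmp D (S'!j) (Cmp D (\<sigma> j) (zY X ! j)) = Cmp D (S'!j) (Cmp D (zY Y ! j) (\<rho> (Suc j)))"
      using hom_assoc[OF D xX(2) conjunct1[OF conjunct2[OF \<sigma>j]] S'h] \<sigma>j f_sq(2) R[of "Suc t"] t
        hom_assoc[OF D conjunct2[OF \<rho>j(2)] R't(2) xT(2)] g_sq(2)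
        hom_assoc[OF D conjunct2[OF \<rho>j(2)] xY(2) S'h] j n_def by (simp add: Suc_le_eq)
    have "Cmp D (\<sigma> j) (zX X ! j) = Cmp D (zX Y ! j) (\<rho> j)"
      by (rule monicD[OF M _ _ e1])
        (use hom_cmp[OF D xX(1) conjunct1[OF conjunct2[OF \<sigma>j]]] hom_cmp[OF D conjunct2[OF \<rho>j(1)] xY(1)]
          dom in simp_all)
    moreover have "Cmp D (\<sigma> j) (zY X ! j) = Cmp D (zY Y ! j) (\<rho> (Suc j))"
      by (rule monicD[OF M _ _ e2])
        (use hom_cmp[OF D xX(2) conjunct1[OF conjunct2[OF \<sigma>j]]] hom_cmp[OF D conjunct2[OF \<rho>j(2)] xY(2)]
          dom in simp_all)
    ultimately show ?thesis ..
  qed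
  then have ok\<phi>: "zmap_ok D \<phi>"
    unfolding \<phi>_def n_def zmap_ok_vertical_iff[OF t\<phi>[unfolded n_def] nY[unfolded n_def]]
    using \<rho>n by (simp add: n_def Suc_le_eq)
  have "isoC (Zcat D) \<phi>"
    unfolding \<phi>_def n_def
    by (rule vertical_iso[OF D ok\<phi>[unfolded \<phi>_def n_def]]) (use nY \<rho> \<rho>n \<sigma> n_def in auto)
  moreover have "Zmap X T fs R S = Cmp (Zcat D) (Zmap Y T fs R' S') \<phi>"
  proof -
    have "map (\<lambda>j. fs ! j) [0..<n] = fs" using fD(3) n_def map_nth[of fs] by simp
    moreover have "map (\<lambda>i. Cmp D (R' ! i) (map \<rho> [0..<Suc n] ! hat fs i)) [0..<Suc (zlen T)] = R"
      by (rule map_upt_eqI) (use fD(6) R \<rho>n hat_le_length[of fs] fD(3) n_def in \<open>auto simp: less_Suc_eq_le\<close>)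
    moreover have "map (\<lambda>j. Cmp D (S' ! ([0..<n] ! j)) (map \<sigma> [0..<n] ! j)) [0..<zlen X] = S"
      by (rule map_upt_eqI) (use fD(7) \<sigma> n_def in auto)
    ultimately show ?thesis unfolding \<phi>_def Zcat_cmp_eq[OF ok\<phi>[unfolded \<phi>_def] okg[folded nY]] by simp
  qed
  ultimately show ?thesis using ok\<phi> nY unfolding \<phi>_def hom_def by auto
qed

lemma deg_zmap_unique:
  assumes P: "deg_class D P" and f: "deg_zmap D P (Zmap X T fs R S)" and g: "deg_zmap D P (Zmap Y T gs R' S')"
    and tt: "to_terminal (Zmap X T fs R S) = to_terminal (Zmap Y T gs R' S')"
  shows "\<exists>\<phi>. isoC (Zcat D) \<phi> \<and> hom (Zcat D) \<phi> X Y \<and> Zmap X T fs R S = Cmp (Zcat D) (Zmap Y T gs R' S') \<phi>"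
proof -
  note D = deg_classD(1)[OF P]
  have fs_gs: "fs = gs" and ttR: "map to_terminal R = map to_terminal R'"
    and ttS: "map to_terminal S = map to_terminal S'"
    using tt by (simp_all add: to_terminal_def)
  have okf: "zmap_ok D (Zmap X T fs R S)" and df: "distinct fs" and RP: "set R \<subseteq> P" "set R' \<subseteq> P"
    and SP: "set S \<subseteq> P" "set S' \<subseteq> P"
    and nf: "\<And>i. i < zlen T \<Longrightarrow> i \<notin> set fs \<Longrightarrow> Cmp D (zX T ! i) (R' ! i) \<in> P"
    and okg: "zmap_ok D (Zmap Y T fs R' S')"
    using f g unfolding deg_zmap_Zmap fs_gs by auto
  note tf = zmap_okD(1)[OF okf] and tg = zmap_okD(1)[OF okg]
  note fD = zmap_typedD[OF tf] and gD = zmap_typedD[OF tg]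
  define m where "m = zlen T"
  have "\<exists>s. isoC D s \<and> hom D s (zS X ! j) (zS Y ! j) \<and> S ! j = Cmp D (S' ! j) s" if j: "j < zlen X" for j
  proof -
    have "S ! j \<in> P" "S' ! j \<in> P" "to_terminal (S ! j) = to_terminal (S' ! j)"
      using SP fD(7) gD(7) j fD(3) gD(3) arg_cong[where f="\<lambda>l. l ! j", OF ttS] by (auto simp: subset_iff)
    then show ?thesis using deg_class_unique_hom[OF P _ _ fD(9)[OF j] gD(9)[of j]] j fD(3) gD(3) by simp
  qed
  then obtain \<sigma> where \<sigma>: "\<And>j. j < zlen X \<Longrightarrow> isoC D (\<sigma> j) \<and> hom D (\<sigma> j) (zS X ! j) (zS Y ! j) \<and> S ! j = Cmp D (S' ! j) (\<sigma> j)"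
    by metis
  have "\<exists>r. isoC D r \<and> hom D r (zR X ! hat fs i) (zR Y ! hat fs i) \<and> R ! i = Cmp D (R' ! i) r" if i: "i \<le> m" for i
  proof -
    have "R ! i \<in> P" "R' ! i \<in> P" "to_terminal (R ! i) = to_terminal (R' ! i)"
      using RP fD(6) gD(6) i m_def arg_cong[where f="\<lambda>l. l ! i", OF ttR] by (auto simp: subset_iff)
    then show ?thesis using deg_class_unique_hom[OF P _ _ fD(8)[of i] gD(8)[of i]] i m_def by simp
  qed
  then obtain \<rho>' where \<rho>': "\<And>i. i \<le> m \<Longrightarrow> isoC D (\<rho>' i) \<and> hom D (\<rho>' i) (zR X ! hat fs i) (zR Y ! hat fs i) \<and>
      R ! i = Cmp D (R' ! i) (\<rho>' i)"
    by metis
  \<comment> \<open>Off the image of \<open>f\<^sub>s\<close> the composite of \<open>g(r\<^sub>t)\<close> with the forward arrow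
    \<open>T(r\<^sub>t) \<rightarrow> T(s\<^sub>t)\<close> lies in \<open>P\<close>, so it is monic, and it equalises \<open>\<rho>' t\<close> and \<open>\<rho>' (t+1)\<close>.\<close>
  have \<rho>'_step: "\<rho>' t = \<rho>' (Suc t)" if t: "t < m" "t \<notin> set fs" for t
  proof -
    have hs: "hat fs (Suc t) = hat fs t" using hat_Suc_eq_iff[OF fD(5)] t(2) by simp
    have tT: "t < zlen T" using t m_def by simp
    have e: "Cmp D (zX T ! t) (R!t) = Cmp D (zY T ! t) (R!Suc t)"
      "Cmp D (zX T ! t) (R'!t) = Cmp D (zY T ! t) (R'!Suc t)"
      using okf okg t tT unfolding zmap_ok_injective_iff[OF tf df] zmap_ok_injective_iff[OF tg df] by simp_all
    note xT = zig_hom[OF fD(2) tT] and \<rho>t = \<rho>'[of t] \<rho>'[of "Suc t"]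
    have M: "monic D (Cmp D (zX T ! t) (R'!t))" using deg_classD(3)[OF P nf[OF tT t(2)]] .
    have dom: "Dom D (Cmp D (zX T ! t) (R'!t)) = zR Y ! hat fs t"
      using hom_cmp[OF D gD(8)[of t] xT(1)] t m_def by (simp add: hom_def)
    have "Cmp D (Cmp D (zX T ! t) (R'!t)) (\<rho>' t) = Cmp D (zX T ! t) (R!t)"
      using hom_assoc[OF D conjunct1[OF conjunct2[OF \<rho>t(1)]] gD(8)[of t] xT(1)] \<rho>t(1) t m_def by simp
    also have "\<dots> = Cmp D (Cmp D (zX T ! t) (R'!t)) (\<rho>' (Suc t))"
      using hom_assoc[OF D conjunct1[OF conjunct2[OF \<rho>t(2)]] gD(8)[of "Suc t"] xT(2)] \<rho>t(2) t m_def e by simp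
    finally have eq: "Cmp D (Cmp D (zX T ! t) (R'!t)) (\<rho>' t) = Cmp D (Cmp D (zX T ! t) (R'!t)) (\<rho>' (Suc t))" .
    show ?thesis
      by (rule monicD[where x = "zR X ! hat fs t", OF M _ _ eq]) (use \<rho>t t m_def hs dom in \<open>simp_all add: Suc_le_eq\<close>)
  qed
  obtain \<rho> where \<rho>'_\<rho>: "\<And>i. i \<le> m \<Longrightarrow> \<rho>' i = \<rho> (hat fs i)"
    using hat_factorization[OF fD(5), where m = m and E = \<rho>', OF \<rho>'_step] by blast
  have \<rho>: "isoC D (\<rho> k) \<and> hom D (\<rho> k) (zR X ! k) (zR Y ! k)" if k: "k \<le> zlen X" for k
  proof -
    obtain i where "i \<le> m" "hat fs i = k" using hat_surj[OF fD(5) df, of m k] fD(3,4) k m_def by auto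
    then show ?thesis using \<rho>'[of i] \<rho>'_\<rho>[of i] by auto
  qed
  have R: "R ! i = Cmp D (R' ! i) (\<rho> (hat fs i))" if "i \<le> zlen T" for i
    using \<rho>'[of i] \<rho>'_\<rho>[of i] that m_def by simp
  show ?thesis
    unfolding fs_gs[symmetric] by (rule deg_zmap_vertical_factor[OF P f g[folded fs_gs] \<sigma> \<rho> R])
qed

text \<open>For injective \<open>u : [n] \<rightarrow> [m]\<close> and a zigzag \<open>X\<close> of length \<open>n\<close>, \<open>lift_map D X u m\<close> is the
  canonical map over \<open>u\<close> out of \<open>X\<close>: its codomain has \<open>X(r\<^sub>\<hat>\<^sub>u\<^sub>(\<^sub>i\<^sub>))\<close> as \<open>i\<close>-th regular
  object, \<open>X(s\<^sub>j)\<close> as \<open>u(j)\<close>-th singular object, and identity arrows at the singular places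
  outside the image of \<open>u\<close>. Every zigzag map \<open>f\<close> with \<open>f\<^sub>s = u\<close> factors through it via the
  vertical map \<open>lift_factor\<close>.\<close>

definition lift_zig :: "'a U cat \<Rightarrow> 'a U \<Rightarrow> nat list \<Rightarrow> nat \<Rightarrow> 'a U" where
  "lift_zig D X u m = Zig (map (\<lambda>i. zR X ! hat u i) [0..<Suc m])
     (map (\<lambda>i. if i \<in> set u then zS X ! hat u i else zR X ! hat u i) [0..<m])
     (map (\<lambda>i. if i \<in> set u then zX X ! hat u i else Idn D (zR X ! hat u i)) [0..<m])
     (map (\<lambda>i. if i \<in> set u then zY X ! hat u i else Idn D (zR X ! hat u i)) [0..<m])"

definition lift_map :: "'a U cat \<Rightarrow> 'a U \<Rightarrow> nat list \<Rightarrow> nat \<Rightarrow> 'a U" where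
  "lift_map D X u m = Zmap X (lift_zig D X u m) u (map (\<lambda>i. Idn D (zR X ! hat u i)) [0..<Suc m])
     (map (\<lambda>j. Idn D (zS X ! j)) [0..<zlen X])"

definition lift_factor :: "'a U cat \<Rightarrow> 'a U \<Rightarrow> 'a U \<Rightarrow> nat list \<Rightarrow> 'a U list \<Rightarrow> 'a U list \<Rightarrow> 'a U" where
  "lift_factor D X T u R S = Zmap (lift_zig D X u (zlen T)) T [0..<zlen T] R
     (map (\<lambda>i. if i \<in> set u then S ! hat u i else Cmp D (zX T ! i) (R ! i)) [0..<zlen T])"

lemma lift_zig_simps:
  "zlen (lift_zig D X u m) = m"
  "i \<le> m \<Longrightarrow> zR (lift_zig D X u m) ! i = zR X ! hat u i"
  "i < m \<Longrightarrow> zS (lift_zig D X u m) ! i = (if i \<in> set u then zS X ! hat u i else zR X ! hat u i)"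
  "i < m \<Longrightarrow> zX (lift_zig D X u m) ! i = (if i \<in> set u then zX X ! hat u i else Idn D (zR X ! hat u i))"
  "i < m \<Longrightarrow> zY (lift_zig D X u m) ! i = (if i \<in> set u then zY X ! hat u i else Idn D (zR X ! hat u i))"
  unfolding lift_zig_def zlen_def by (simp_all add: nth_map_upt less_Suc_eq_le del: upt_Suc)

lemma lift_zig_ok:
  assumes D: "is_cat D" and X: "zig_ok D X"
    and u: "sorted u" "distinct u" "length u = zlen X" "\<forall>j<zlen X. u ! j < m"
  shows "zig_ok D (lift_zig D X u m)"
proof -
  have r: "zR X ! hat u i \<in> Ob D" for i using zig_ob_r[OF X] hat_le_length[of u i] u(3) by simp
  have s: "zS X ! hat u i \<in> Ob D" if "i \<in> set u" for i
    using zig_ob_s[OF X] hat_at_mem[OF u(1,2) that] u(3) by simp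
  have "hom D (zX (lift_zig D X u m) ! i) (zR (lift_zig D X u m) ! i) (zS (lift_zig D X u m) ! i) \<and>
      hom D (zY (lift_zig D X u m) ! i) (zR (lift_zig D X u m) ! Suc i) (zS (lift_zig D X u m) ! i)"
    if i: "i < m" for i
  proof (cases "i \<in> set u")
    case True
    then show ?thesis using zig_hom[OF X] hat_at_mem[OF u(1,2) True] i u(3) by (simp add: lift_zig_simps)
  next
    case False
    then have "hat u (Suc i) = hat u i" using hat_Suc_eq_iff[OF u(1)] by simp
    then show ?thesis using hom_idn[OF D r] False i by (simp add: lift_zig_simps)
  qed
  then show ?thesis
    unfolding lift_zig_def using r s
    by (intro zig_okI) (auto simp: lift_zig_def less_Suc_eq_le simp del: upt_Suc)
qed

lemma lift_map_ok:
  assumes D: "is_cat D" and X: "zig_ok D X"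
    and u: "sorted u" "distinct u" "length u = zlen X" "\<forall>j<zlen X. u ! j < m"
  shows "zmap_ok D (lift_map D X u m)"
proof -
  note L = lift_zig_ok[OF D X u]
  have r: "zR X ! hat u i \<in> Ob D" for i using zig_ob_r[OF X] hat_le_length[of u i] u(3) by simp
  have t: "zmap_typed D X (lift_zig D X u m) u (map (\<lambda>i. Idn D (zR X ! hat u i)) [0..<Suc m])
      (map (\<lambda>j. Idn D (zS X ! j)) [0..<zlen X])"
  proof (rule zmap_typedI)
    fix j assume j: "j < zlen X"
    then have "u ! j \<in> set u" "hat u (u ! j) = j" using hat_nth[OF u(1,2)] u(3) by simp_all
    then show "hom D (map (\<lambda>j. Idn D (zS X ! j)) [0..<zlen X] ! j) (zS X ! j) (zS (lift_zig D X u m) ! (u ! j))"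
      using hom_idn[OF D zig_ob_s[OF X j]] j u(4) by (simp add: lift_zig_simps)
  qed (use X L u hom_idn[OF D r] in \<open>auto simp: lift_zig_simps nth_map_upt less_Suc_eq_le simp del: upt_Suc\<close>)
  have "Cmp D (Idn D (zS X ! j)) (zX X ! j) = Cmp D (zX X ! j) (Idn D (zR X ! j)) \<and>
      Cmp D (Idn D (zS X ! j)) (zY X ! j) = Cmp D (zY X ! j) (Idn D (zR X ! Suc j))" if "j < zlen X" for j
    using hom_idl[OF D zig_hom(1)[OF X that]] hom_idr[OF D zig_hom(1)[OF X that]]
      hom_idl[OF D zig_hom(2)[OF X that]] hom_idr[OF D zig_hom(2)[OF X that]] by simp
  moreover have "u ! j \<in> set u" "hat u (u ! j) = j" "hat u (Suc (u ! j)) = Suc j" if "j < zlen X" for j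
    using that hat_nth[OF u(1,2)] hat_Suc_nth[OF u(1,2)] u(3) by simp_all
  moreover have "hat u (Suc i) = hat u i" if "i \<notin> set u" for i using hat_Suc_eq_iff[OF u(1)] that by simp
  ultimately show ?thesis
    unfolding lift_map_def zmap_ok_injective_iff[OF t u(2)] using u(4)
    by (auto simp: lift_zig_simps nth_map_upt Suc_le_eq simp del: upt_Suc)
qed

lemma lift_factor_ok:
  assumes D: "is_cat D" and f: "zmap_ok D (Zmap X T u R S)" and du: "distinct u"
  shows "zmap_ok D (lift_factor D X T u R S)"
    and "Cmp (Zcat D) (lift_factor D X T u R S) (lift_map D X u (zlen T)) = Zmap X T u R S"
proof -
  note tf = zmap_okD(1)[OF f]
  note fD = zmap_typedD[OF tf]
  define m where "m = zlen T"
  define wS where "wS = map (\<lambda>i. if i \<in> set u then S ! hat u i else Cmp D (zX T ! i) (R ! i)) [0..<m]"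
  note mem = hat_at_mem[OF fD(5) du]
  have u_bound: "\<forall>j<zlen X. u ! j < m" using fD(4) m_def by simp
  have f_sq: "Cmp D (S ! hat u i) (zX X ! hat u i) = Cmp D (zX T ! i) (R ! i)"
    "Cmp D (S ! hat u i) (zY X ! hat u i) = Cmp D (zY T ! i) (R ! Suc i)" if "i \<in> set u" for i
    using f mem[OF that] fD(3) unfolding zmap_ok_injective_iff[OF tf du] by auto
  have f_off: "Cmp D (zX T ! i) (R ! i) = Cmp D (zY T ! i) (R ! Suc i)" if "i < m" "i \<notin> set u" for i
    using f that m_def unfolding zmap_ok_injective_iff[OF tf du] by auto
  have wS_hom: "hom D (wS ! i) (zS (lift_zig D X u m) ! i) (zS T ! i)" if i: "i < m" for i
  proof (cases "i \<in> set u")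
    case True
    then show ?thesis using fD(9)[of "hat u i"] mem[OF True] fD(3) i by (simp add: wS_def lift_zig_simps)
  next
    case False
    then show ?thesis using hom_cmp[OF D fD(8)[of i] zig_hom(1)[OF fD(2)]] i m_def
      by (simp add: wS_def lift_zig_simps)
  qed
  have t: "zmap_typed D (lift_zig D X u m) T [0..<zlen (lift_zig D X u m)] R wS"
    by (rule zmap_typed_verticalI)
      (use lift_zig_ok[OF D fD(1,5) du fD(3) u_bound] fD wS_hom m_def in \<open>auto simp: lift_zig_simps wS_def\<close>)
  have "Cmp D (wS ! i) (zX (lift_zig D X u m) ! i) = Cmp D (zX T ! i) (R ! i) \<and>
      Cmp D (wS ! i) (zY (lift_zig D X u m) ! i) = Cmp D (zY T ! i) (R ! Suc i)" if i: "i < m" for i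
  proof (cases "i \<in> set u")
    case True
    then show ?thesis using f_sq i by (simp add: wS_def lift_zig_simps)
  next
    case False
    then show ?thesis using f_off[OF i False] hom_idr[OF D hom_cmp[OF D fD(8)[of i] zig_hom(1)[OF fD(2)]]] i m_def
      by (simp add: wS_def lift_zig_simps)
  qed
  then show ok: "zmap_ok D (lift_factor D X T u R S)"
    unfolding lift_factor_def wS_def[symmetric] m_def[symmetric]
    using zmap_ok_vertical_iff[OF t] by (simp add: lift_zig_simps m_def)
  have "map (\<lambda>j. [0..<m] ! j) u = u" using u_bound fD(3) by (auto intro!: nth_equalityI)
  moreover have "map (\<lambda>i. Cmp D (R ! i) (map (\<lambda>i. Idn D (zR X ! hat u i)) [0..<Suc m] ! hat [0..<m] i)) [0..<Suc m] = R"
    by (rule map_upt_eqI) (use fD(6) hom_idr[OF D fD(8)] hat_upt m_def in \<open>auto simp: nth_map_upt less_Suc_eq_le simp del: upt_Suc\<close>)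
  moreover have "map (\<lambda>j. Cmp D (wS ! (u ! j)) (map (\<lambda>j. Idn D (zS X ! j)) [0..<zlen X] ! j)) [0..<zlen X] = S"
    by (rule map_upt_eqI) (use fD hom_idr[OF D fD(9)] hat_nth[OF fD(5) du] u_bound in \<open>auto simp: wS_def\<close>)
  ultimately show "Cmp (Zcat D) (lift_factor D X T u R S) (lift_map D X u (zlen T)) = Zmap X T u R S"
    using Zcat_cmp_eq[OF lift_map_ok[OF D fD(1,5) du fD(3) u_bound, unfolded lift_map_def]
        ok[unfolded lift_factor_def wS_def[symmetric] m_def[symmetric] lift_zig_simps]]
    unfolding lift_factor_def lift_map_def wS_def[symmetric] m_def[symmetric] lift_zig_simps
    by simp
qed

lemma cocartesian_vertical_factor:
  assumes c: "cocartesian D f" and h: "h \<in> Ar (Zcat D)" "mdom h = mdom f" "zlen (mcod h) = zlen (mcod f)"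
    "mS h = mS f"
  shows "\<exists>!v. v \<in> Ar (Zcat D) \<and> mdom v = mcod f \<and> mcod v = mcod h \<and> Cmp (Zcat D) v f = h \<and>
    mS v = [0..<zlen (mcod f)]"
proof -
  have "zmap_ok D f" using c unfolding cocartesian_def by simp
  then obtain X Y fs R S where ef: "f = Zmap X Y fs R S" and okf: "zmap_ok D (Zmap X Y fs R S)"
    by (rule zmap_okE)
  note fD = zmap_typedD[OF zmap_okD(1)[OF okf]]
  have "map (\<lambda>j. [0..<zlen Y] ! j) fs = fs" using fD(3,4) by (auto intro!: nth_equalityI)
  then show ?thesis using c h ef unfolding cocartesian_def by simp
qed

lemma cocartesian_left_inverse:
  assumes D: "is_cat D" and c: "cocartesian D f"
    and v: "v \<in> Ar (Zcat D)" "mdom v = mcod f" "Cmp (Zcat D) v f = h"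
    and w: "w \<in> Ar (Zcat D)" "mdom w = mcod v" "mcod w = mcod f" "Cmp (Zcat D) w h = f"
    and vertical: "mS v = [0..<zlen (mcod f)]" "mS w = [0..<zlen (mcod f)]"
  shows "Cmp (Zcat D) w v = Idn (Zcat D) (mcod f)"
proof -
  note ZD = Zcat_is_cat[OF D]
  have f: "f \<in> Ar (Zcat D)" using c unfolding cocartesian_def by simp
  have "Cmp (Zcat D) (Cmp (Zcat D) w v) f = Cmp (Zcat D) w (Cmp (Zcat D) v f)"
    using cat_assoc[OF ZD f v(1) w(1)] v(2) w(2) by (simp del: Zcat_simps(6))
  then have wv: "Cmp (Zcat D) w v \<in> Ar (Zcat D) \<and> mdom (Cmp (Zcat D) w v) = mcod f \<and>
      mcod (Cmp (Zcat D) w v) = mcod f \<and> Cmp (Zcat D) (Cmp (Zcat D) w v) f = f \<and>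
      mS (Cmp (Zcat D) w v) = [0..<zlen (mcod f)]"
    using cat_cmp_ar[OF ZD v(1) w(1)] v w vertical
    by (simp add: Zcat_cmp_sel map_upt_eqI del: Zcat_simps(6))
  have "Idn (Zcat D) (mcod f) \<in> Ar (Zcat D) \<and> mdom (Idn (Zcat D) (mcod f)) = mcod f \<and>
      mcod (Idn (Zcat D) (mcod f)) = mcod f \<and> Cmp (Zcat D) (Idn (Zcat D) (mcod f)) f = f \<and>
      mS (Idn (Zcat D) (mcod f)) = [0..<zlen (mcod f)]"
    using cat_idn_ar[OF ZD cat_cod_ob[OF ZD f]] cat_idl[OF ZD f] by (simp del: Zcat_simps(6))
  then show ?thesis using wv cocartesian_vertical_factor[OF c f refl refl refl] by blast
qed

text \<open>If \<open>f\<close> is cocartesian, the comparison map \<open>v\<close> from \<open>T\<close> to the lift, obtained from the universal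
  property, is inverse to \<open>lift_factor\<close>.\<close>

lemma lift_factor_iso:
  assumes D: "is_cat D" and c: "cocartesian D (Zmap X T u R S)" and du: "distinct u"
  shows "isoC (Zcat D) (lift_factor D X T u R S)"
proof -
  define m L wS where "m = zlen T" and "L = lift_zig D X u m"
    and "wS = map (\<lambda>i. if i \<in> set u then S ! hat u i else Cmp D (zX T ! i) (R ! i)) [0..<m]"
  have okf: "zmap_ok D (Zmap X T u R S)" using c unfolding cocartesian_def by simp
  note fD = zmap_typedD[OF zmap_okD(1)[OF okf]]
  have ub: "\<forall>j<zlen X. u ! j < m" using fD(4) m_def by simp
  note okh = lift_map_ok[OF D fD(1,5) du fD(3) ub]
  note okw = lift_factor_ok(1)[OF D okf du] and wh = lift_factor_ok(2)[OF D okf du]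
  have w: "lift_factor D X T u R S = Zmap L T [0..<m] R wS" unfolding lift_factor_def L_def wS_def m_def ..
  obtain v where v: "v \<in> Ar (Zcat D)" "mdom v = T" "mcod v = L" "Cmp (Zcat D) v (Zmap X T u R S) = lift_map D X u m"
    "mS v = [0..<m]"
    using cocartesian_vertical_factor[OF c, of "lift_map D X u m"] okh
    by (auto simp: lift_map_def lift_zig_simps L_def m_def simp del: Zcat_simps(6))
  have "Cmp (Zcat D) (Zmap L T [0..<m] R wS) v = Idn (Zcat D) (mcod (Zmap X T u R S))"
    by (rule cocartesian_left_inverse[OF D c v(1) _ v(4)])
      (use v okw[unfolded w] wh[unfolded w] m_def in \<open>simp_all del: Zcat_simps(6)\<close>)
  then have wv: "Cmp (Zcat D) (Zmap L T [0..<m] R wS) v = Idn (Zcat D) T" by (simp del: Zcat_simps(5,6))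
  obtain Rv Sv where ev: "v = Zmap T L [0..<m] Rv Sv" and okv: "zmap_ok D (Zmap T L [0..<m] Rv Sv)"
    using v zmap_okE by (metis Zcat_simps(2) mS.simps mcod.simps mdom.simps mem_Collect_eq)
  note vD = zmap_typedD[OF zmap_okD(1)[OF okv]] and wD = zmap_typedD[OF zmap_okD(1)[OF okw[unfolded w]]]
  have zL: "zlen L = m" unfolding L_def by (simp add: lift_zig_simps)
  have vf: "Cmp D (Rv ! i) (R ! i) = Idn D (zR X ! hat u i)" if i: "i \<le> m" for i
    using arg_cong[where f="\<lambda>t. mR t ! i", OF v(4)[unfolded ev Zcat_cmp_eq[OF okf okv]]] i zL hat_upt[OF i]
    unfolding lift_map_def by (simp add: nth_map_upt less_Suc_eq_le del: upt_Suc)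
  have vS: "Cmp D (Sv ! (u ! j)) (S ! j) = Idn D (zS X ! j)" if j: "j < zlen X" for j
    using arg_cong[where f="\<lambda>t. mSl t ! j", OF v(4)[unfolded ev Zcat_cmp_eq[OF okf okv]]] j
    unfolding lift_map_def by simp
  note wv' = wv[unfolded ev Zcat_cmp_eq[OF okv[unfolded zL[symmetric]] okw[unfolded w]]]
  have lT: "length (zR T) = Suc m" "length (zS T) = m" using zig_okD(2)[OF fD(2)] m_def by (simp_all add: zlen_def)
  have wR: "Cmp D (R ! i) (Rv ! i) = Idn D (zR T ! i)" if i: "i \<le> m" for i
    using arg_cong[where f="\<lambda>t. mR t ! i", OF wv'] i zL lT hat_upt[OF i] fD(6) m_def
    by (simp add: nth_map_upt less_Suc_eq_le del: upt_Suc)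
  have wS_Sv: "Cmp D (wS ! i) (Sv ! i) = Idn D (zS T ! i)" if i: "i < m" for i
    using arg_cong[where f="\<lambda>t. mSl t ! i", OF wv'] i zL lT by simp
  have Rh: "hom D (R ! i) (zR L ! i) (zR T ! i)" "hom D (Rv ! i) (zR T ! i) (zR L ! i)" if "i \<le> m" for i
    using wD(8)[of i] vD(8)[of i] that zL m_def hat_upt[OF that] by simp_all
  have Sh: "hom D (wS ! i) (zS L ! i) (zS T ! i)" "hom D (Sv ! i) (zS T ! i) (zS L ! i)" if "i < m" for i
    using wD(9)[of i] vD(9)[of i] that zL m_def by simp_all
  have "Cmp D (Sv ! i) (wS ! i) = Idn D (zS L ! i)" if i: "i < m" for i
  proof (cases "i \<in> set u")
    case True
    then show ?thesis using vS[of "hat u i"] hat_at_mem[OF fD(5) du True] fD(3) i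
      by (simp add: wS_def L_def lift_zig_simps)
  next
    case False
    have "\<forall>j<zlen T. Cmp D (Sv ! j) (zX T ! j) = Cmp D (zX L ! j) (Rv ! j) \<and>
        Cmp D (Sv ! j) (zY T ! j) = Cmp D (zY L ! j) (Rv ! Suc j)"
      using okv[unfolded m_def] zmap_ok_vertical_iff[OF zmap_okD(1)[OF okv[unfolded m_def]] zL[unfolded m_def]]
      by simp
    then have "Cmp D (Sv ! i) (zX T ! i) = Cmp D (zX L ! i) (Rv ! i)" using i m_def by simp
    also have "\<dots> = Rv ! i" using hom_idl[OF D Rh(2)[of i]] False i by (simp add: L_def lift_zig_simps)
    finally show ?thesis
      using hom_assoc[OF D Rh(1)[of i] zig_hom(1)[OF fD(2)] Sh(2)[OF i]] vf[of i] False i m_def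
      by (simp add: wS_def L_def lift_zig_simps)
  qed
  then have "isoC D (wS ! i)" if "i < m" for i using isoI[OF Sh[OF that]] wS_Sv that by simp
  moreover have "isoC D (R ! i)" if "i \<le> m" for i using isoI[OF Rh[OF that]] vf wR that L_def
    by (simp add: lift_zig_simps)
  ultimately show ?thesis
    unfolding w using vertical_iso[OF D okw[unfolded w, folded zL]] zL m_def by simp
qed

lemma simple_deg_deg_zmap:
  assumes P: "deg_class D P" and f: "f \<in> simple_deg D"
  shows "deg_zmap D P f"
proof -
  note D = deg_classD(1)[OF P]
  have c: "cocartesian D f" and du: "distinct (mS f)" using f unfolding simple_deg_def by auto
  then obtain X T u R S where ef: "f = Zmap X T u R S" and okf: "zmap_ok D (Zmap X T u R S)"
    unfolding cocartesian_def by (auto elim: zmap_okE)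
  note fD = zmap_typedD[OF zmap_okD(1)[OF okf]]
  have "lift_factor D X T u R S \<in> parallel_deg D P"
    using Zcat_iso_parallel_deg[OF D deg_classD(4)[OF P] lift_factor_iso[OF D c[unfolded ef]]] du ef by simp
  then have R: "set R \<subseteq> P"
    and wS: "\<And>i. i < zlen T \<Longrightarrow> (if i \<in> set u then S ! hat u i else Cmp D (zX T ! i) (R ! i)) \<in> P"
    unfolding parallel_deg_def lift_factor_def by (auto simp: subset_iff)
  have "set S \<subseteq> P"
  proof
    fix s assume "s \<in> set S"
    then obtain j where "j < zlen X" "s = S ! j" using fD(7) by (auto simp: in_set_conv_nth)
    then show "s \<in> P" using wS[of "u ! j"] fD(3,4) hat_nth[OF fD(5)] du ef by (simp add: nth_mem)
  qed
  moreover have "Cmp D (zX T ! i) (R ! i) \<in> P" if "i < zlen T" "i \<notin> set u" for i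
    using wS[OF that(1)] that(2) by simp
  ultimately show ?thesis unfolding ef deg_zmap_Zmap using okf du ef R by simp
qed

lemma compgen_deg_zmap:
  assumes P: "deg_class D P" and f: "f \<in> compgen (Zcat D) (simple_deg D \<union> parallel_deg D P)"
  shows "deg_zmap D P f"
  using f
proof (induction rule: compgen.induct)
  case (base f)
  then show ?case using simple_deg_deg_zmap[OF P] parallel_deg_zmap by blast
next
  case (comp f g)
  then obtain X Y fs R S Z gs R' S' where "f = Zmap X Y fs R S" "g = Zmap Y Z gs R' S'"
    unfolding deg_zmap_def by (metis Zcat_simps(3,4) mcod.simps mdom.simps zmap_okE)
  then show ?case using deg_zmap_comp[OF P] comp.IH by simp
qed

lemma deg_class_Zcat:
  assumes P: "deg_class D P"
  shows "deg_class (Zcat D) (compgen (Zcat D) (simple_deg D \<union> parallel_deg D P))"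
    (is "deg_class _ ?P")
  unfolding deg_class_def
proof (intro conjI ballI allI impI subsetI)
  note D = deg_classD(1)[OF P]
  show "is_cat (Zcat D)" by (rule Zcat_is_cat[OF D])
  have shape: "\<exists>X Y fs R S. f = Zmap X Y fs R S \<and> deg_zmap D P (Zmap X Y fs R S)" if "f \<in> ?P" for f
    using compgen_deg_zmap[OF P that] unfolding deg_zmap_def by (metis zmap_okE)
  fix f
  show "f \<in> ?P \<Longrightarrow> f \<in> Ar (Zcat D)" using compgen_deg_zmap[OF P] unfolding deg_zmap_def by simp
  show "f \<in> ?P \<Longrightarrow> monic (Zcat D) f" using deg_zmap_monic[OF P] compgen_deg_zmap[OF P] by blast
  show "isoC (Zcat D) f \<Longrightarrow> f \<in> ?P"
    using Zcat_iso_parallel_deg[OF D deg_classD(4)[OF P]] by (blast intro: compgen.base)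
  fix g
  show "f \<in> ?P \<Longrightarrow> g \<in> ?P \<Longrightarrow> Cod (Zcat D) f = Dom (Zcat D) g \<Longrightarrow> Cmp (Zcat D) g f \<in> ?P"
    by (rule compgen.comp)
  assume f: "f \<in> ?P" and g: "g \<in> ?P" and c: "Cod (Zcat D) f = Cod (Zcat D) g"
    and tt: "to_terminal f = to_terminal g"
  obtain X T fs R S Y gs R' S' where e: "f = Zmap X T fs R S" "g = Zmap Y T gs R' S'"
    and d: "deg_zmap D P (Zmap X T fs R S)" "deg_zmap D P (Zmap Y T gs R' S')"
    using shape[OF f] shape[OF g] c by auto
  show "\<exists>\<phi>. isoC (Zcat D) \<phi> \<and> Dom (Zcat D) \<phi> = Dom (Zcat D) f \<and> Cod (Zcat D) \<phi> = Dom (Zcat D) g \<and>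
      f = Cmp (Zcat D) g \<phi>"
    using deg_zmap_unique[OF P d tt[unfolded e]] e unfolding hom_def by (simp del: Zcat_simps(6)) blast
qed

lemma deg_class_isos:
  assumes D: "is_cat D"
  shows "deg_class D {f. isoC D f}"
  unfolding deg_class_def
proof (intro conjI ballI allI impI subsetI)
  fix f assume f: "f \<in> {f. isoC D f}"
  then show "f \<in> Ar D" "monic D f" using iso_monic[OF D] unfolding isoC_def by auto
  fix g assume g: "g \<in> {f. isoC D f}"
  show "Cod D f = Dom D g \<Longrightarrow> Cmp D g f \<in> {f. isoC D f}" using iso_cmp[OF D] f g by simp
  assume c: "Cod D f = Cod D g"
  have fh: "hom D f (Dom D f) (Cod D g)" and gh: "hom D g (Dom D g) (Cod D g)"
    using iso_hom[of D f] iso_hom[of D g] f g c by simp_all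
  note g' = inv_arr[OF _ gh] 
  have "isoC D (Cmp D (inv_arr D g) f)" using iso_cmp[OF D _ g'(4)] f g g'(1) fh unfolding hom_def by simp
  moreover have "f = Cmp D g (Cmp D (inv_arr D g) f)"
    using hom_assoc[OF D fh g'(1) gh] g'(3) hom_idl[OF D fh] g by simp
  ultimately show "\<exists>\<phi>. isoC D \<phi> \<and> Dom D \<phi> = Dom D f \<and> Cod D \<phi> = Dom D g \<and> f = Cmp D g \<phi>"
    using hom_cmp[OF D fh g'(1)] g unfolding hom_def by auto
qed (use D in simp_all)

lemma deg_class_deg:
  assumes C: "is_cat C"
  shows "deg_class (Zn C n) (deg C n)"
proof (induction n)
  case 0
  then show ?case using deg_class_isos[OF liftC_is_cat[OF C]] by (simp add: Zn_0)
next
  case (Suc n)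
  then show ?case using deg_class_Zcat[OF Suc.IH] by (simp add: Zn_Suc)
qed

section \<open>Finiteness\<close>

text \<open>\<open>to_terminal x\<close> is the shape of \<open>x\<close>; it forgets the objects and arrows of the base
  category but keeps all the combinatorics of iterated zigzags.\<close>

lemma to_terminal_simps [simp]:
  "to_terminal (At a) = At ()"
  "to_terminal (Zig rs ss xs ys) =
     Zig (map to_terminal rs) (map to_terminal ss) (map to_terminal xs) (map to_terminal ys)"
  "to_terminal (Zmap X Y fs R S) = Zmap (to_terminal X) (to_terminal Y) fs (map to_terminal R) (map to_terminal S)"
  by (simp_all add: to_terminal_def)

fun shape_dom :: "unit U \<Rightarrow> unit U" where
  "shape_dom (Zmap X Y fs R S) = X"
| "shape_dom _ = At ()"

definition arrow_shapes :: "'a U cat \<Rightarrow> unit U set \<Rightarrow> unit U set \<Rightarrow> unit U set" where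
  "arrow_shapes D A B = to_terminal ` {x \<in> Ar D. to_terminal (Dom D x) \<in> A \<and> to_terminal (Cod D x) \<in> B}"

definition finite_shapes :: "'a U cat \<Rightarrow> 'a U set \<Rightarrow> bool" where
  "finite_shapes D P \<longleftrightarrow> (\<forall>T\<in>Ob D. finite (to_terminal ` {f \<in> P. Cod D f = T})) \<and>
     (\<forall>A B. finite A \<longrightarrow> finite B \<longrightarrow> finite (arrow_shapes D A B)) \<and>
     (\<forall>x\<in>Ar D. to_terminal (Dom D x) = shape_dom (to_terminal x))"

definition bounded_lists :: "nat \<Rightarrow> 'b set \<Rightarrow> 'b list set" where
  "bounded_lists n A = {xs. set xs \<subseteq> A \<and> length xs \<le> n}"

lemma finite_bounded_lists: "finite A \<Longrightarrow> finite (bounded_lists n A)"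
  unfolding bounded_lists_def by (rule finite_lists_length_le)

lemma bounded_listsI: "length xs \<le> n \<Longrightarrow> (\<And>i. i < length xs \<Longrightarrow> xs ! i \<in> A) \<Longrightarrow> xs \<in> bounded_lists n A"
  unfolding bounded_lists_def by (auto simp: in_set_conv_nth)

lemma finite_shapes_liftC: "finite_shapes (liftC C) {f. isoC (liftC C) f}"
proof -
  have "to_terminal ` {f \<in> {f. isoC (liftC C) f}. Cod (liftC C) f = T} \<subseteq> {At ()}" for T
    unfolding isoC_def liftC_def by auto
  moreover have "arrow_shapes (liftC C) A B \<subseteq> {At ()}" for A B
    unfolding arrow_shapes_def liftC_def by auto
  moreover have "to_terminal (Dom (liftC C) x) = shape_dom (to_terminal x)" if "x \<in> Ar (liftC C)" for x
    using that unfolding liftC_def by auto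
  ultimately show ?thesis
    unfolding finite_shapes_def by (meson finite.emptyI finite_insert finite_subset)
qed

lemma zig_shape:
  assumes "zig_ok D X"
  shows "to_terminal X = Zig (map to_terminal (zR X)) (map to_terminal (zS X)) (map to_terminal (zX X))
    (map to_terminal (zY X))"
  using zig_okD(1)[OF assms] by (metis to_terminal_simps(2))

lemma zig_shape_entries:
  assumes "zig_ok D X"
  shows "zlen (to_terminal X) = zlen X"
    "k \<le> zlen X \<Longrightarrow> to_terminal (zR X ! k) \<in> set (zR (to_terminal X))"
    "k < zlen X \<Longrightarrow> to_terminal (zS X ! k) \<in> set (zS (to_terminal X))"
  using zig_shape[OF assms] zig_okD(2)[OF assms] unfolding zlen_def by (auto simp: Suc_le_eq)

definition zig_shapes :: "'a U cat \<Rightarrow> unit U set \<Rightarrow> unit U set \<Rightarrow> nat \<Rightarrow> unit U set" where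
  "zig_shapes D RR SS m = (\<lambda>(a, b, c, d). Zig a b c d) `
     (bounded_lists (Suc m) RR \<times> bounded_lists m SS \<times>
      bounded_lists m (arrow_shapes D RR SS) \<times> bounded_lists m (arrow_shapes D RR SS))"

lemma finite_zig_shapes:
  assumes "finite_shapes D P" "finite RR" "finite SS"
  shows "finite (zig_shapes D RR SS m)"
  using assms unfolding zig_shapes_def finite_shapes_def
  by (intro finite_imageI finite_cartesian_product finite_bounded_lists) auto

lemma zig_shapes_mem:
  assumes X: "zig_ok D X" and m: "zlen X \<le> m"
    and RR: "\<And>k. k \<le> zlen X \<Longrightarrow> to_terminal (zR X ! k) \<in> RR"
    and SS: "\<And>k. k < zlen X \<Longrightarrow> to_terminal (zS X ! k) \<in> SS"
  shows "to_terminal X \<in> zig_shapes D RR SS m"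
proof -
  note xD = zig_okD[OF X]
  have "to_terminal (zX X ! k) \<in> arrow_shapes D RR SS" "to_terminal (zY X ! k) \<in> arrow_shapes D RR SS"
    if k: "k < zlen X" for k
    using xD(7,8)[OF k] RR[of k] RR[of "Suc k"] SS[OF k] k unfolding arrow_shapes_def by auto
  then show ?thesis
    unfolding zig_shapes_def zig_shape[OF X] using m xD(2-4) RR SS
    by (intro image_eqI[where x = "(map to_terminal (zR X), map to_terminal (zS X),
        map to_terminal (zX X), map to_terminal (zY X))"])
      (auto intro!: bounded_listsI simp: zlen_def less_Suc_eq_le)
qed

lemma finite_arrow_shapes_Zcat:
  assumes F: "finite_shapes D P" and A: "finite A" and B: "finite B"
  shows "finite (arrow_shapes (Zcat D) A B)"
proof -
  define M where "M = Max (insert 0 (zlen ` (A \<union> B)))"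
  have M: "zlen a \<le> M" if "a \<in> A \<union> B" for a unfolding M_def using A B that by (intro Max_ge) auto
  define FR where "FR = arrow_shapes D (\<Union>a\<in>A. set (zR a)) (\<Union>b\<in>B. set (zR b))"
  define FS where "FS = arrow_shapes D (\<Union>a\<in>A. set (zS a)) (\<Union>b\<in>B. set (zS b))"
  have "finite FR" "finite FS" using F A B unfolding FR_def FS_def finite_shapes_def by auto
  have "arrow_shapes (Zcat D) A B \<subseteq> (\<lambda>(a, b, fs, r, s). Zmap a b fs r s) `
      (A \<times> B \<times> bounded_lists M {0..<M} \<times> bounded_lists (Suc M) FR \<times> bounded_lists M FS)"
  proof
    fix t assume "t \<in> arrow_shapes (Zcat D) A B"
    then obtain x where x: "zmap_ok D x" "to_terminal (mdom x) \<in> A" "to_terminal (mcod x) \<in> B"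
      and t: "t = to_terminal x" unfolding arrow_shapes_def by auto
    obtain X Y fs R S where ex: "x = Zmap X Y fs R S" and ok: "zmap_ok D (Zmap X Y fs R S)"
      using x(1) by (rule zmap_okE)
    note xD = zmap_typedD[OF zmap_okD(1)[OF ok]]
    have XY: "to_terminal X \<in> A" "to_terminal Y \<in> B" using x ex by simp_all
    have n: "zlen X \<le> M" "zlen Y \<le> M"
      using M[of "to_terminal X"] M[of "to_terminal Y"] XY zig_shape_entries(1)[OF xD(1)]
        zig_shape_entries(1)[OF xD(2)] by simp_all
    have "to_terminal (R ! i) \<in> FR" if "i \<le> zlen Y" for i
      using xD(8)[OF that] zig_shape_entries(2)[OF xD(1), of "hat fs i"] zig_shape_entries(2)[OF xD(2) that]
        hat_le_length[of fs i] xD(3) XY unfolding FR_def arrow_shapes_def hom_def by fastforce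
    moreover have "to_terminal (S ! j) \<in> FS" if "j < zlen X" for j
      using xD(9)[OF that] zig_shape_entries(3)[OF xD(1) that] zig_shape_entries(3)[OF xD(2) xD(4)[OF that]]
        XY unfolding FS_def arrow_shapes_def hom_def by fastforce
    ultimately show "t \<in> (\<lambda>(a, b, fs, r, s). Zmap a b fs r s) `
        (A \<times> B \<times> bounded_lists M {0..<M} \<times> bounded_lists (Suc M) FR \<times> bounded_lists M FS)"
      using t ex XY n xD(3,6,7) less_le_trans[OF xD(4) n(2)]
      by (intro image_eqI[where x = "(to_terminal X, to_terminal Y, fs, map to_terminal R, map to_terminal S)"])
        (auto intro!: bounded_listsI simp: less_Suc_eq_le)
  qed
  then show ?thesis
    by (rule finite_subset)
      (intro finite_imageI finite_cartesian_product finite_bounded_lists A B \<open>finite FR\<close> \<open>finite FS\<close> finite_atLeastLessThan)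
qed

lemma finite_deg_shapes_Zcat:
  assumes P: "deg_class D P" and F: "finite_shapes D P" and T: "zig_ok D T"
  shows "finite (to_terminal ` {f \<in> compgen (Zcat D) (simple_deg D \<union> parallel_deg D P). Cod (Zcat D) f = T})"
proof -
  define m where "m = zlen T"
  define AR where "AR = (\<Union>i\<in>{..m}. to_terminal ` {d \<in> P. Cod D d = zR T ! i})"
  define AS where "AS = (\<Union>i\<in>{..<m}. to_terminal ` {d \<in> P. Cod D d = zS T ! i})"
  define RR SS where "RR = shape_dom ` AR" and "SS = shape_dom ` AS"
  have fin: "finite AR" "finite AS" "finite RR" "finite SS"
    using F zig_ob_r[OF T] zig_ob_s[OF T] unfolding AR_def AS_def RR_def SS_def m_def finite_shapes_def by auto
  have "to_terminal ` {f \<in> compgen (Zcat D) (simple_deg D \<union> parallel_deg D P). Cod (Zcat D) f = T}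
      \<subseteq> (\<lambda>(a, fs, r, s). Zmap a (to_terminal T) fs r s) `
         (zig_shapes D RR SS m \<times> bounded_lists m {0..<m} \<times> bounded_lists (Suc m) AR \<times> bounded_lists m AS)"
  proof
    fix t assume "t \<in> to_terminal ` {f \<in> compgen (Zcat D) (simple_deg D \<union> parallel_deg D P). Cod (Zcat D) f = T}"
    then obtain f where f: "deg_zmap D P f" "mcod f = T" and t: "t = to_terminal f"
      using compgen_deg_zmap[OF P] by auto
    then obtain X fs R S where ef: "f = Zmap X T fs R S" and ok: "zmap_ok D (Zmap X T fs R S)"
      unfolding deg_zmap_def by (metis mcod.simps zmap_okE)
    have df: "distinct fs" and RP: "set R \<subseteq> P" and SP: "set S \<subseteq> P"
      using f(1)[unfolded ef deg_zmap_Zmap] by auto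
    note fD = zmap_typedD[OF zmap_okD(1)[OF ok]]
    have n: "zlen X \<le> m" using distinct_bounded_length_le[OF df, of m] fD(3,4) m_def by simp
    have R: "to_terminal (R ! i) \<in> AR" if "i \<le> m" for i
    proof -
      have "R ! i \<in> P" "Cod D (R ! i) = zR T ! i" using RP fD(6,8) that m_def by (auto simp: hom_def)
      then show ?thesis using that unfolding AR_def by blast
    qed
    have S: "to_terminal (S ! j) \<in> AS" if "j < zlen X" for j
    proof -
      have "S ! j \<in> P" "Cod D (S ! j) = zS T ! (fs ! j)" "fs ! j < m"
        using SP fD(4,7,9) that m_def by (auto simp: hom_def)
      then show ?thesis unfolding AS_def by blast
    qed
    have "to_terminal (zR X ! k) \<in> RR" if k: "k \<le> zlen X" for k
    proof -
      obtain i where i: "i \<le> m" "hat fs i = k" using hat_surj[OF fD(5) df, of m k] fD(3,4) k m_def by auto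
      have "to_terminal (zR X ! k) = shape_dom (to_terminal (R ! i))"
        using F fD(8)[of i] i m_def unfolding finite_shapes_def hom_def by metis
      then show ?thesis using R[OF i(1)] unfolding RR_def by simp
    qed
    moreover have "to_terminal (zS X ! j) \<in> SS" if "j < zlen X" for j
    proof -
      have "to_terminal (zS X ! j) = shape_dom (to_terminal (S ! j))"
        using F fD(9)[OF that] unfolding finite_shapes_def hom_def by metis
      then show ?thesis using S[OF that] unfolding SS_def by simp
    qed
    ultimately have "to_terminal X \<in> zig_shapes D RR SS m" by (rule zig_shapes_mem[OF fD(1) n])
    then show "t \<in> (\<lambda>(a, fs, r, s). Zmap a (to_terminal T) fs r s) `
        (zig_shapes D RR SS m \<times> bounded_lists m {0..<m} \<times> bounded_lists (Suc m) AR \<times> bounded_lists m AS)"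
      using t ef n R S fD(3,4,6,7) m_def
      by (intro image_eqI[where x = "(to_terminal X, fs, map to_terminal R, map to_terminal S)"])
        (auto intro!: bounded_listsI simp: less_Suc_eq_le)
  qed
  then show ?thesis
    by (rule finite_subset)
      (intro finite_imageI finite_cartesian_product finite_bounded_lists finite_zig_shapes[OF F] fin
        finite_atLeastLessThan)
qed

lemma finite_shapes_Zcat:
  assumes P: "deg_class D P" and F: "finite_shapes D P"
  shows "finite_shapes (Zcat D) (compgen (Zcat D) (simple_deg D \<union> parallel_deg D P))"
  unfolding finite_shapes_def
proof (intro conjI ballI allI impI)
  fix x assume "x \<in> Ar (Zcat D)"
  then obtain X Y fs R S where "x = Zmap X Y fs R S" by (auto elim: zmap_okE)
  then show "to_terminal (Dom (Zcat D) x) = shape_dom (to_terminal x)" by simp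
qed (use finite_deg_shapes_Zcat[OF P F] finite_arrow_shapes_Zcat[OF F] in auto)

lemma finite_shapes_deg:
  assumes C: "is_cat C"
  shows "finite_shapes (Zn C n) (deg C n)"
proof (induction n)
  case 0
  then show ?case using finite_shapes_liftC by (simp add: Zn_0)
next
  case (Suc n)
  then show ?case using finite_shapes_Zcat[OF deg_class_deg[OF C] Suc.IH] by (simp add: Zn_Suc)
qed

lemma finite_image_factor:
  assumes "finite (t ` A)" and "\<And>a b. a \<in> A \<Longrightarrow> b \<in> A \<Longrightarrow> t a = t b \<Longrightarrow> F a = F b"
  shows "finite (F ` A)"
proof -
  have "F ` A \<subseteq> (\<lambda>x. F (SOME a. a \<in> A \<and> t a = x)) ` t ` A"
  proof
    fix y assume "y \<in> F ` A"
    then obtain a where a: "a \<in> A" "y = F a" by auto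
    have "(SOME b. b \<in> A \<and> t b = t a) \<in> A \<and> t (SOME b. b \<in> A \<and> t b = t a) = t a"
      by (rule someI_ex) (use a in blast)
    then have "F (SOME b. b \<in> A \<and> t b = t a) = F a" using assms(2) a by blast
    then show "y \<in> (\<lambda>x. F (SOME a. a \<in> A \<and> t a = x)) ` t ` A" using a by force
  qed
  then show ?thesis using assms(1) finite_subset by blast
qed

lemma deg_class_subobj_class_eq:
  assumes P: "deg_class D P" and fg: "f \<in> P" "g \<in> P" "Cod D f = Cod D g" "to_terminal f = to_terminal g"
  shows "subobj_class D f = subobj_class D g"
proof -
  note D = deg_classD(1)[OF P]
  obtain \<phi> where "isoC D \<phi>" "hom D \<phi> (Dom D f) (Dom D g)" "f = Cmp D g \<phi>"
    using deg_class_unique[OF P fg] .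
  moreover obtain \<psi> where "isoC D \<psi>" "hom D \<psi> (Dom D g) (Dom D f)" "g = Cmp D f \<psi>"
    using deg_class_unique[OF P fg(2,1) fg(3,4)[symmetric]] .
  ultimately show ?thesis
    using subobj_class_subset[OF D] deg_classD(2)[OF P] fg(1,2) by (metis subset_antisym)
qed

theorem lemma4p3:
  fixes C :: "'a cat" and n :: nat and T :: "'a U"
  assumes "is_cat C" and "T \<in> Ob (Zn C n)"
  shows "(\<forall>f g. f \<in> deg C n \<longrightarrow> g \<in> deg C n \<longrightarrow>
            Cod (Zn C n) f = T \<longrightarrow> Cod (Zn C n) g = T \<longrightarrow>
            to_terminal f = to_terminal g \<longrightarrow>
            (\<exists>\<phi>. isoC (Zn C n) \<phi> \<and> Dom (Zn C n) \<phi> = Dom (Zn C n) f \<and>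
                  Cod (Zn C n) \<phi> = Dom (Zn C n) g \<and> f = Cmp (Zn C n) g \<phi>))
         \<and> finite (DegSub C n T)"
proof
  note P = deg_class_deg[OF assms(1), of n]
  show "\<forall>f g. f \<in> deg C n \<longrightarrow> g \<in> deg C n \<longrightarrow> Cod (Zn C n) f = T \<longrightarrow> Cod (Zn C n) g = T \<longrightarrow>
      to_terminal f = to_terminal g \<longrightarrow>
      (\<exists>\<phi>. isoC (Zn C n) \<phi> \<and> Dom (Zn C n) \<phi> = Dom (Zn C n) f \<and>
            Cod (Zn C n) \<phi> = Dom (Zn C n) g \<and> f = Cmp (Zn C n) g \<phi>)"
    using P unfolding deg_class_def by simp
  have "finite (to_terminal ` {f \<in> deg C n. Cod (Zn C n) f = T})"
    using finite_shapes_deg[OF assms(1), of n] assms(2) unfolding finite_shapes_def by blast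
  then show "finite (DegSub C n T)"
    unfolding DegSub_def by (rule finite_image_factor) (use deg_class_subobj_class_eq[OF P] in auto)
qed

end
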